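(* For each $n\in\mathbb{N}$, fix an arbitrary $n$-qubit state $\rho$, let $U$ be a uniformly random Clifford unitary on $n$ qubits, and measure all qubits of $U\rho U^\dagger$ in the computational basis. Then for all $\alpha\in(0,1)$ and every fixed $x\in\{0,1\}^n$, $$\Pr_U\left(p_x\ge\frac{\alpha}{2^n}\right)>\frac{(1-\alpha)^2}{2},$$ where $p_x=\mathrm{tr}(U\rho U^\dagger|x\rangle\langle x|)$.
   Context: The uniform distribution over the (finite) $n$-qubit Clifford group, i.e., the group of unitaries (modulo phase) mapping the $n$-qubit Pauli group to itself under conjugation. *)

theory Defs
  imports Complex_Main "Jordan_Normal_Form.Matrix"
begin

definition dagger :: "complex mat \<Rightarrow> complex mat" where
  "dagger A = mat (dim_col A) (dim_row A) (\<lambda>(i,j). cnj (A $$ (j,i)))"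

definition mtrace :: "complex mat \<Rightarrow> complex" where
  "mtrace A = (\<Sum>i<dim_row A. A $$ (i,i))"

definition unitary_mat :: "nat \<Rightarrow> complex mat \<Rightarrow> bool" where
  "unitary_mat N U \<longleftrightarrow> U \<in> carrier_mat N N \<and> dagger U * U = 1\<^sub>m N"

definition density_mat :: "nat \<Rightarrow> complex mat \<Rightarrow> bool" where
  "density_mat N \<rho> \<longleftrightarrow> \<rho> \<in> carrier_mat N N \<and> dagger \<rho> = \<rho> \<and>
     (\<forall>v \<in> carrier_vec N. let q = (\<Sum>i<N. cnj (v $ i) * (\<rho> *\<^sub>v v) $ i) in Im q = 0 \<and> Re q \<ge> 0) \<and>
     mtrace \<rho> = 1"

definition pauliI :: "complex mat" where "pauliI = mat 2 2 (\<lambda>(i,j). if i = j then 1 else 0)"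
definition pauliX :: "complex mat" where "pauliX = mat 2 2 (\<lambda>(i,j). if i \<noteq> j then 1 else 0)"
definition pauliY :: "complex mat" where
  "pauliY = mat 2 2 (\<lambda>(i,j). if i = 0 \<and> j = 1 then -\<i> else if i = 1 \<and> j = 0 then \<i> else 0)"
definition pauliZ :: "complex mat" where
  "pauliZ = mat 2 2 (\<lambda>(i,j). if i = j then (if i = 0 then 1 else -1) else 0)"

text \<open>Tensor (Kronecker) product of a list of 2x2 matrices; qubit k corresponds to bit k
  of the computational-basis index.\<close>
definition tensor_list :: "complex mat list \<Rightarrow> complex mat" where
  "tensor_list ps = mat (2 ^ length ps) (2 ^ length ps)
     (\<lambda>(r,c). \<Prod>k<length ps. (ps ! k) $$ (r div 2 ^ k mod 2, c div 2 ^ k mod 2))"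

definition pauli_group :: "nat \<Rightarrow> complex mat set" where
  "pauli_group n = {c \<cdot>\<^sub>m tensor_list ps | c ps.
     c \<in> {1, -1, \<i>, -\<i>} \<and> length ps = n \<and> set ps \<subseteq> {pauliI, pauliX, pauliY, pauliZ}}"

definition clifford :: "nat \<Rightarrow> complex mat set" where
  "clifford n = {U. unitary_mat (2 ^ n) U \<and>
     (\<forall>P \<in> pauli_group n. U * P * dagger U \<in> pauli_group n)}"

definition phase_rel :: "nat \<Rightarrow> (complex mat \<times> complex mat) set" where
  "phase_rel n = {(U, V). U \<in> clifford n \<and> V \<in> clifford n \<and> (\<exists>c. cmod c = 1 \<and> V = c \<cdot>\<^sub>m U)}"

definition clifford_mod_phase :: "nat \<Rightarrow> complex mat set set" where
  "clifford_mod_phase n = clifford n // phase_rel n"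

definition basis_proj :: "nat \<Rightarrow> nat \<Rightarrow> complex mat" where
  "basis_proj N x = mat N N (\<lambda>(i,j). if i = x \<and> j = x then 1 else 0)"

definition outcome_prob :: "nat \<Rightarrow> complex mat \<Rightarrow> complex mat \<Rightarrow> nat \<Rightarrow> real" where
  "outcome_prob n U \<rho> x = Re (mtrace (U * \<rho> * dagger U * basis_proj (2 ^ n) x))"

text \<open>Probability of an event over a uniformly random element of the Clifford group modulo phase.
  The event is required for all representatives of the class (it is phase invariant anyway).\<close>
definition clifford_prob :: "nat \<Rightarrow> (complex mat \<Rightarrow> bool) \<Rightarrow> real" where
  "clifford_prob n E = real (card {C \<in> clifford_mod_phase n. \<forall>U \<in> C. E U})
                        / real (card (clifford_mod_phase n))"

end

(*
  Write p(U) = <x| U rho U^dagger |x>. Right multiplication by a Pauli word permutes the Clifford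
  group modulo phase, so Clifford averages of functions of p can first be twirled over the Pauli
  words. Expanding rho in the Pauli basis and using the orthogonality of the commutation signs, the
  first moment of p is 2^-n, and the second moment is a sum of squared Pauli coefficients of rho
  weighted by K(P) = sum_C <x| C T_P C^dagger |x>^2. All non-identity words P have the same weight:
  any two of them anticommute with a common word r, and the Clifford (T_r + T_P) / sqrt 2 conjugates
  T_r to T_P. Comparing with the sum of all weights gives K(P) = |Cl| / (2^n + 1), and tr rho^2 <= 1
  bounds the second moment by 2 / (2^n (2^n + 1)). The Paley-Zygmund inequality then gives the
  probability bound (1 - alpha)^2 (2^n + 1) / 2^(n+1). The Clifford group modulo phase is finite
  because a Clifford unitary is determined up to phase by its action on the Pauli group.
*)

theory Submission
  imports Defs "Jordan_Normal_Form.Determinant"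
begin

section \<open>Sums over binary digits and over words\<close>

lemma sum_lessThan_double:
  fixes h :: "nat \<Rightarrow> 'a::comm_monoid_add"
  shows "(\<Sum>m<2*K. h m) = (\<Sum>m<K. h (2*m) + h (2*m+1))"
proof (induction K)
  case 0 then show ?case by simp
next
  case (Suc K)
  have "2 * Suc K = Suc (Suc (2*K))" by simp
  then show ?case using Suc by (simp add: add.assoc)
qed

lemma double_add_bit_div_mod:
  fixes m b k :: nat
  assumes "b < 2"
  shows "(2*m+b) div (2*2^k) mod 2 = m div 2^k mod 2"
proof -
  have "(2*m+b) div (2*2^k) = ((2*m+b) div 2) div 2^k"
    by (simp add: div_mult2_eq)
  also have "(2*m+b) div 2 = m" using assms by simp
  finally show ?thesis by simp
qed

lemma sum_binary_digits_prod:
  fixes g :: "nat \<Rightarrow> nat \<Rightarrow> 'a::comm_semiring_1"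
  shows "(\<Sum>m<2^n. \<Prod>k<n. g k (m div 2^k mod 2)) = (\<Prod>k<n. g k 0 + g k 1)"
proof (induction n arbitrary: g)
  case 0 then show ?case by simp
next
  case (Suc n)
  have e: "(\<Prod>k<Suc n. g k ((2*m+b) div 2^k mod 2)) = g 0 b * (\<Prod>k<n. g (Suc k) (m div 2^k mod 2))"
    if "b < 2" for m b
    using that by (simp add: prod.lessThan_Suc_shift double_add_bit_div_mod del: prod.lessThan_Suc)
  have "(\<Sum>m<2^Suc n. \<Prod>k<Suc n. g k (m div 2^k mod 2))
      = (\<Sum>m<2^n. (\<Prod>k<Suc n. g k ((2*m+0) div 2^k mod 2)) + (\<Prod>k<Suc n. g k ((2*m+1) div 2^k mod 2)))"
    using sum_lessThan_double[of "\<lambda>m. \<Prod>k<Suc n. g k (m div 2^k mod 2)" "2^n"] by simp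
  also have "\<dots> = (\<Sum>m<2^n. (g 0 0 + g 0 1) * (\<Prod>k<n. g (Suc k) (m div 2^k mod 2)))"
    by (simp only: e, simp add: algebra_simps)
  also have "\<dots> = (g 0 0 + g 0 1) * (\<Prod>k<n. g (Suc k) 0 + g (Suc k) 1)"
    by (simp add: sum_distrib_left[symmetric] Suc.IH[of "\<lambda>k. g (Suc k)"])
  also have "\<dots> = (\<Prod>k<Suc n. g k 0 + g k 1)"
    by (simp add: prod.lessThan_Suc_shift del: prod.lessThan_Suc)
  finally show ?case .
qed

lemma binary_digits_eq:
  fixes i l :: nat
  assumes "i < 2^n" "l < 2^n" "\<forall>k<n. i div 2^k mod 2 = l div 2^k mod 2"
  shows "i = l"
  using assms
proof (induction n arbitrary: i l)
  case 0 then show ?case by simp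
next
  case (Suc n)
  have "i div 2 = l div 2"
  proof (rule Suc.IH)
    show "i div 2 < 2^n" "l div 2 < 2^n" using Suc.prems by auto
    show "\<forall>k<n. i div 2 div 2 ^ k mod 2 = l div 2 div 2 ^ k mod 2"
    proof (intro allI impI)
      fix k assume "k < n"
      then have "i div 2^(Suc k) mod 2 = l div 2^(Suc k) mod 2" using Suc.prems by auto
      then show "i div 2 div 2 ^ k mod 2 = l div 2 div 2 ^ k mod 2"
        by (simp add: div_mult2_eq)
    qed
  qed
  moreover have "i mod 2 = l mod 2" using Suc.prems(3)[rule_format, of 0] by simp
  ultimately show ?case by (metis div_mult_mod_eq)
qed

lemma sum_lists_length_prod:
  fixes g :: "nat \<Rightarrow> 'b \<Rightarrow> 'a::comm_semiring_1"
  assumes "finite S"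
  shows "(\<Sum>ps\<in>{xs. set xs \<subseteq> S \<and> length xs = n}. \<Prod>k<n. g k (ps!k)) = (\<Prod>k<n. \<Sum>p\<in>S. g k p)"
proof (induction n arbitrary: g)
  case 0
  have "{xs. set xs \<subseteq> S \<and> length xs = 0} = {[]}" by auto
  then show ?case by simp
next
  case (Suc n)
  let ?L = "\<lambda>n. {xs. set xs \<subseteq> S \<and> length xs = n}"
  have L_Suc: "?L (Suc n) = (\<lambda>(p,ps). p # ps) ` (S \<times> ?L n)"
    by (auto simp: length_Suc_conv image_iff)
  have inj: "inj_on (\<lambda>(p,ps). p # ps) (S \<times> ?L n)" by (auto simp: inj_on_def)
  have "(\<Sum>ps\<in>?L (Suc n). \<Prod>k<Suc n. g k (ps!k))
      = (\<Sum>(p,ps)\<in>S \<times> ?L n. \<Prod>k<Suc n. g k ((p#ps)!k))"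
    unfolding L_Suc by (subst sum.reindex[OF inj]) (simp add: case_prod_unfold)
  also have "\<dots> = (\<Sum>(p,ps)\<in>S \<times> ?L n. g 0 p * (\<Prod>k<n. g (Suc k) (ps!k)))"
    by (simp add: prod.lessThan_Suc_shift del: prod.lessThan_Suc)
  also have "\<dots> = (\<Sum>p\<in>S. \<Sum>ps\<in>?L n. g 0 p * (\<Prod>k<n. g (Suc k) (ps!k)))"
    by (rule sum.cartesian_product[symmetric])
  also have "\<dots> = (\<Sum>p\<in>S. g 0 p) * (\<Prod>k<n. \<Sum>p\<in>S. g (Suc k) p)"
    by (simp add: sum_distrib_left[symmetric] sum_distrib_right Suc.IH[of "\<lambda>k. g (Suc k)"])
  also have "\<dots> = (\<Prod>k<Suc n. \<Sum>p\<in>S. g k p)"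
    by (simp add: prod.lessThan_Suc_shift del: prod.lessThan_Suc)
  finally show ?case .
qed

lemma prod_if_const:
  "(\<Prod>m<n. (if Q m then (a::'a::comm_semiring_1) else 0)) = (if \<forall>m<n. Q m then a^n else 0)"
proof (cases "\<forall>m<n. Q m")
  case True
  then have "(\<Prod>m<n. (if Q m then a else 0)) = (\<Prod>m<n. a)" by (intro prod.cong) auto
  then show ?thesis using True by simp
next
  case False
  then obtain m where "m < n" "\<not> Q m" by auto
  then have "(\<Prod>m<n. (if Q m then a else 0)) = 0" by (intro prod_zero) auto
  then show ?thesis by (subst if_not_P[OF False])
qed

lemma sum_swap_outer4:
  "(\<Sum>p\<in>A. \<Sum>i\<in>I. \<Sum>j\<in>J. \<Sum>k\<in>K. \<Sum>l\<in>L. F p i j k l) = (\<Sum>i\<in>I. \<Sum>j\<in>J. \<Sum>k\<in>K. \<Sum>l\<in>L. \<Sum>p\<in>A. F p i j k l)"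
proof -
  have "(\<Sum>p\<in>A. \<Sum>i\<in>I. \<Sum>j\<in>J. \<Sum>k\<in>K. \<Sum>l\<in>L. F p i j k l) = (\<Sum>i\<in>I. \<Sum>p\<in>A. \<Sum>j\<in>J. \<Sum>k\<in>K. \<Sum>l\<in>L. F p i j k l)"
    by (rule sum.swap)
  also have "\<dots> = (\<Sum>i\<in>I. \<Sum>j\<in>J. \<Sum>p\<in>A. \<Sum>k\<in>K. \<Sum>l\<in>L. F p i j k l)"
    by (rule sum.cong[OF refl], rule sum.swap)
  also have "\<dots> = (\<Sum>i\<in>I. \<Sum>j\<in>J. \<Sum>k\<in>K. \<Sum>p\<in>A. \<Sum>l\<in>L. F p i j k l)"
    by (rule sum.cong[OF refl], rule sum.cong[OF refl], rule sum.swap)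
  also have "\<dots> = (\<Sum>i\<in>I. \<Sum>j\<in>J. \<Sum>k\<in>K. \<Sum>l\<in>L. \<Sum>p\<in>A. F p i j k l)"
    by (rule sum.cong[OF refl], rule sum.cong[OF refl], rule sum.cong[OF refl], rule sum.swap)
  finally show ?thesis .
qed

lemma sum_swap_pairs:
  "(\<Sum>i\<in>I. \<Sum>j\<in>J. \<Sum>c\<in>C. \<Sum>d\<in>D. f i j c d) = (\<Sum>c\<in>C. \<Sum>d\<in>D. \<Sum>i\<in>I. \<Sum>j\<in>J. f i j c d)"
proof -
  have "(\<Sum>i\<in>I. \<Sum>j\<in>J. \<Sum>c\<in>C. \<Sum>d\<in>D. f i j c d) = (\<Sum>i\<in>I. \<Sum>c\<in>C. \<Sum>j\<in>J. \<Sum>d\<in>D. f i j c d)"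
    by (rule sum.cong[OF refl], rule sum.swap)
  also have "\<dots> = (\<Sum>c\<in>C. \<Sum>i\<in>I. \<Sum>j\<in>J. \<Sum>d\<in>D. f i j c d)"
    by (rule sum.swap)
  also have "\<dots> = (\<Sum>c\<in>C. \<Sum>i\<in>I. \<Sum>d\<in>D. \<Sum>j\<in>J. f i j c d)"
    by (rule sum.cong[OF refl], rule sum.cong[OF refl], rule sum.swap)
  also have "\<dots> = (\<Sum>c\<in>C. \<Sum>d\<in>D. \<Sum>i\<in>I. \<Sum>j\<in>J. f i j c d)"
    by (rule sum.cong[OF refl], rule sum.swap)
  finally show ?thesis .
qed

lemma sum_sum_delta:
  fixes g :: "nat \<Rightarrow> nat \<Rightarrow> complex"
  assumes "i < N" "k < N"
  shows "(\<Sum>j<N. \<Sum>l<N. if i = l \<and> j = k then g j l else 0) = g k i"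
proof -
  have "(\<Sum>j<N. \<Sum>l<N. if i = l \<and> j = k then g j l else 0) = (\<Sum>j<N. if j = k then g j i else 0)"
    using assms by (intro sum.cong refl) (auto simp: if_distrib cong: if_cong)
  also have "\<dots> = g k i" using assms by simp
  finally show ?thesis .
qed

lemma sum_sum_cross_eq_mult:
  "(\<Sum>i<N. \<Sum>j<N. a i * b j * (a j * b i)) = (\<Sum>i<N. a i * b i) * (\<Sum>i<N. a i * (b i :: complex))"
  by (simp add: sum_product ac_simps)

lemma smult_smult_mat:
  "a \<cdot>\<^sub>m (b \<cdot>\<^sub>m A) = (a * b) \<cdot>\<^sub>m (A :: 'a::comm_ring_1 mat)"
  by (rule eq_matI) auto

lemma one_smult_mat: "1 \<cdot>\<^sub>m A = (A :: 'a::comm_ring_1 mat)"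
  by (rule eq_matI) auto

lemma cnj_mult_self_unit: "cmod c = 1 \<Longrightarrow> cnj c * c = 1"
  using complex_norm_square[of c] by (simp add: mult.commute)

lemma smult_mult_left:
  "dim_col A = dim_row B \<Longrightarrow> (c \<cdot>\<^sub>m A) * B = c \<cdot>\<^sub>m (A * (B :: 'a::comm_ring_1 mat))"
  by (rule eq_matI) simp_all

lemma smult_mult_right:
  "dim_col A = dim_row B \<Longrightarrow> A * (c \<cdot>\<^sub>m B) = c \<cdot>\<^sub>m (A * (B :: 'a::comm_ring_1 mat))"
  by (rule eq_matI) simp_all

lemma assoc_mult_dims:
  "dim_col A = dim_row B \<Longrightarrow> dim_col B = dim_row C \<Longrightarrow> A * B * C = A * (B * (C :: 'a::comm_ring_1 mat))"
proof -
  assume a: "dim_col A = dim_row B" "dim_col B = dim_row C"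
  have "A \<in> carrier_mat (dim_row A) (dim_col A)" "B \<in> carrier_mat (dim_col A) (dim_col B)"
    "C \<in> carrier_mat (dim_col B) (dim_col C)" using a unfolding carrier_mat_def by auto
  then show ?thesis by (rule assoc_mult_mat)
qed

lemmas smult_mult_simps = smult_mult_left smult_mult_right assoc_mult_dims smult_smult_mat

lemma carrier_dims: "A \<in> carrier_mat a b \<Longrightarrow> dim_row A = a \<and> dim_col A = b" by auto

lemma index_mult_square: assumes "A \<in> carrier_mat N N" "B \<in> carrier_mat N N" "i < N" "j < N"
  shows "(A * B) $$ (i,j) = (\<Sum>k<N. A $$ (i,k) * B $$ (k,j))"
  using assms by (simp add: scalar_prod_def atLeast0LessThan)

lemma index_mult3_square:
  assumes "A \<in> carrier_mat N N" "B \<in> carrier_mat N N" "C \<in> carrier_mat N N" "i < N" "j < N"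
  shows "(A * B * C) $$ (i,j) = (\<Sum>c<N. \<Sum>d<N. A $$ (i,c) * B $$ (c,d) * C $$ (d,j))"
proof -
  have "(A * B * C) $$ (i,j) = (\<Sum>d<N. (A * B) $$ (i,d) * C $$ (d,j))"
    using assms by (intro index_mult_square) auto
  also have "\<dots> = (\<Sum>d<N. (\<Sum>c<N. A $$ (i,c) * B $$ (c,d)) * C $$ (d,j))"
    using assms by (intro sum.cong refl) (simp del: index_mult_mat add: index_mult_square)
  also have "\<dots> = (\<Sum>d<N. \<Sum>c<N. A $$ (i,c) * B $$ (c,d) * C $$ (d,j))"
    by (simp add: sum_distrib_right)
  also have "\<dots> = (\<Sum>c<N. \<Sum>d<N. A $$ (i,c) * B $$ (c,d) * C $$ (d,j))"
    by (rule sum.swap)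
  finally show ?thesis .
qed

lemma mult_cancel_left_inverse:
  "A * B = 1\<^sub>m N \<Longrightarrow> dim_col A = dim_row B \<Longrightarrow> dim_col B = dim_row X \<Longrightarrow> dim_row X = N \<Longrightarrow> A * (B * X) = (X :: complex mat)"
  using assoc_mult_dims[of A B X] by simp

lemma dagger_dims[simp]: "dim_row (dagger A) = dim_col A" "dim_col (dagger A) = dim_row A"
  by (simp_all only: dagger_def dim_row_mat dim_col_mat)

lemma index_dagger[simp]:
  "i < dim_col A \<Longrightarrow> j < dim_row A \<Longrightarrow> dagger A $$ (i,j) = cnj (A $$ (j,i))"
  unfolding dagger_def by (subst index_mat(1)) auto

lemma dagger_carrier: "A \<in> carrier_mat nr nc \<Longrightarrow> dagger A \<in> carrier_mat nc nr"
  unfolding carrier_mat_def by simp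

lemma dagger_mult: assumes "A \<in> carrier_mat a b" "B \<in> carrier_mat b c"
  shows "dagger (A * B) = dagger B * dagger A"
  by (rule eq_matI) (use assms in \<open>auto simp: scalar_prod_def mult.commute\<close>)

lemma dagger_smult: "dagger (c \<cdot>\<^sub>m A) = cnj c \<cdot>\<^sub>m dagger A"
  by (rule eq_matI) auto

lemma dagger_add: assumes "A \<in> carrier_mat a b" "B \<in> carrier_mat a b"
  shows "dagger (A + B) = dagger A + dagger B"
  by (rule eq_matI) (use assms in auto)

section \<open>Single-qubit Pauli matrices\<close>

definition pauli_basis :: "complex mat set" where "pauli_basis = {pauliI, pauliX, pauliY, pauliZ}"

definition pauli_phases :: "complex set" where "pauli_phases = {1, -1, \<i>, -\<i>}"

lemma nat_less_2_iff: "(i::nat) < 2 \<longleftrightarrow> i = 0 \<or> i = 1" by auto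

lemma pauli_carrier: "pauliI \<in> carrier_mat 2 2" "pauliX \<in> carrier_mat 2 2"
  "pauliY \<in> carrier_mat 2 2" "pauliZ \<in> carrier_mat 2 2"
  by (auto simp: pauliI_def pauliX_def pauliY_def pauliZ_def)

lemma pauli_basis_carrier: "p \<in> pauli_basis \<Longrightarrow> p \<in> carrier_mat 2 2"
  using pauli_carrier by (auto simp: pauli_basis_def)

lemma pauli_entries:
  "pauliI $$ (0,0) = 1" "pauliI $$ (0,1) = 0" "pauliI $$ (1,0) = 0" "pauliI $$ (1,1) = 1"
  "pauliX $$ (0,0) = 0" "pauliX $$ (0,1) = 1" "pauliX $$ (1,0) = 1" "pauliX $$ (1,1) = 0"
  "pauliY $$ (0,0) = 0" "pauliY $$ (0,1) = -\<i>" "pauliY $$ (1,0) = \<i>" "pauliY $$ (1,1) = 0"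
  "pauliZ $$ (0,0) = 1" "pauliZ $$ (0,1) = 0" "pauliZ $$ (1,0) = 0" "pauliZ $$ (1,1) = -1"
  by (auto simp: pauliI_def pauliX_def pauliY_def pauliZ_def)

lemma pauli_entries_Suc:
  "pauliI $$ (0,Suc 0) = 0" "pauliI $$ (Suc 0,0) = 0" "pauliI $$ (Suc 0,Suc 0) = 1"
  "pauliX $$ (0,Suc 0) = 1" "pauliX $$ (Suc 0,0) = 1" "pauliX $$ (Suc 0,Suc 0) = 0"
  "pauliY $$ (0,Suc 0) = -\<i>" "pauliY $$ (Suc 0,0) = \<i>" "pauliY $$ (Suc 0,Suc 0) = 0"
  "pauliZ $$ (0,Suc 0) = 0" "pauliZ $$ (Suc 0,0) = 0" "pauliZ $$ (Suc 0,Suc 0) = -1"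
  using pauli_entries by simp_all

lemma pauli_dims: "dim_row pauliI = 2" "dim_col pauliI = 2" "dim_row pauliX = 2" "dim_col pauliX = 2"
  "dim_row pauliY = 2" "dim_col pauliY = 2" "dim_row pauliZ = 2" "dim_col pauliZ = 2"
  by (auto simp: pauliI_def pauliX_def pauliY_def pauliZ_def)

lemma pauli_distinct[simp]:
  "pauliI \<noteq> pauliX" "pauliI \<noteq> pauliY" "pauliI \<noteq> pauliZ"
  "pauliX \<noteq> pauliY" "pauliX \<noteq> pauliZ" "pauliY \<noteq> pauliZ"
  "pauliX \<noteq> pauliI" "pauliY \<noteq> pauliI" "pauliZ \<noteq> pauliI"
  "pauliY \<noteq> pauliX" "pauliZ \<noteq> pauliX" "pauliZ \<noteq> pauliY"
  by (metis pauli_entries zero_neq_one complex_i_not_zero neg_equal_0_iff_equal one_neq_neg_one)+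

lemma index_mult_mat_2: assumes "A \<in> carrier_mat 2 2" "B \<in> carrier_mat 2 2" "i < 2" "j < 2"
  shows "(A * B) $$ (i,j) = A $$ (i,0) * B $$ (0,j) + A $$ (i,1) * B $$ (1,j)"
  using assms by (simp add: scalar_prod_def numeral_2_eq_2)

lemma scalar_prod_row_col_2:
  assumes "A \<in> carrier_mat 2 2" "B \<in> carrier_mat 2 2" "i < 2" "j < 2"
  shows "row A i \<bullet> col B j = A $$ (i,0) * B $$ (0,j) + A $$ (i,1) * B $$ (1,j)"
  using index_mult_mat_2[OF assms] assms by simp

lemma mat2_eqI: assumes "A \<in> carrier_mat 2 2" "B \<in> carrier_mat 2 2"
  "A $$ (0,0) = B $$ (0,0)" "A $$ (0,1) = B $$ (0,1)" "A $$ (1,0) = B $$ (1,0)" "A $$ (1,1) = B $$ (1,1)"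
  shows "A = B"
  by (rule eq_matI) (use assms in \<open>auto simp: nat_less_2_iff\<close>)

lemma pauliI_eq_one: "pauliI = 1\<^sub>m 2"
  by (rule mat2_eqI) (auto simp: pauli_carrier pauli_entries pauli_entries_Suc)

lemma pauli_mult_table:
  "pauliX * pauliX = pauliI" "pauliY * pauliY = pauliI" "pauliZ * pauliZ = pauliI"
  "pauliX * pauliY = \<i> \<cdot>\<^sub>m pauliZ" "pauliY * pauliX = (-\<i>) \<cdot>\<^sub>m pauliZ"
  "pauliY * pauliZ = \<i> \<cdot>\<^sub>m pauliX" "pauliZ * pauliY = (-\<i>) \<cdot>\<^sub>m pauliX"
  "pauliZ * pauliX = \<i> \<cdot>\<^sub>m pauliY" "pauliX * pauliZ = (-\<i>) \<cdot>\<^sub>m pauliY"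
  by (auto intro!: mat2_eqI intro: mult_carrier_mat smult_carrier_mat simp: pauli_carrier scalar_prod_row_col_2 pauli_entries pauli_entries_Suc pauli_dims)

lemmas pauli_entry_simps = pauli_carrier scalar_prod_row_col_2 pauli_entries pauli_entries_Suc pauli_dims

lemma pauli_basisE: assumes "p \<in> pauli_basis"
  obtains "p = pauliI" | "p = pauliX" | "p = pauliY" | "p = pauliZ"
  using assms unfolding pauli_basis_def by auto

definition pauli_comm_sign :: "complex mat \<Rightarrow> complex mat \<Rightarrow> complex" where
  "pauli_comm_sign p q = (if p = pauliI \<or> q = pauliI \<or> p = q then 1 else -1)"

definition pauli_mult_label :: "complex mat \<Rightarrow> complex mat \<Rightarrow> complex mat" where
  "pauli_mult_label p q = (if p = pauliI then q else if q = pauliI then p else if p = q then pauliI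
     else if p \<noteq> pauliZ \<and> q \<noteq> pauliZ then pauliZ else if p \<noteq> pauliX \<and> q \<noteq> pauliX then pauliX else pauliY)"

definition pauli_mult_phase :: "complex mat \<Rightarrow> complex mat \<Rightarrow> complex" where
  "pauli_mult_phase p q = (if p = pauliI \<or> q = pauliI \<or> p = q then 1
     else if (p = pauliX \<and> q = pauliY) \<or> (p = pauliY \<and> q = pauliZ) \<or> (p = pauliZ \<and> q = pauliX) then \<i> else -\<i>)"

lemma pauliI_mult: "pauliI * p = p" "p * pauliI = p" if "p \<in> pauli_basis"
  using that by (auto elim!: pauli_basisE simp: pauliI_eq_one pauli_dims)

lemma pauli_comm_sign_mult:
  "p \<in> pauli_basis \<Longrightarrow> q \<in> pauli_basis \<Longrightarrow> p * q = pauli_comm_sign p q \<cdot>\<^sub>m (q * p)"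
  by (elim pauli_basisE) (simp_all add: pauli_comm_sign_def pauli_mult_table pauliI_mult pauli_basis_def smult_smult_mat one_smult_mat)

lemma pauli_mult_eq:
  "p \<in> pauli_basis \<Longrightarrow> q \<in> pauli_basis \<Longrightarrow> p * q = pauli_mult_phase p q \<cdot>\<^sub>m pauli_mult_label p q"
  by (elim pauli_basisE) (simp_all add: pauli_mult_phase_def pauli_mult_label_def pauli_mult_table pauliI_mult pauli_basis_def smult_smult_mat one_smult_mat)

lemma pauli_mult_label_basis:
  "p \<in> pauli_basis \<Longrightarrow> q \<in> pauli_basis \<Longrightarrow> pauli_mult_label p q \<in> pauli_basis"
  unfolding pauli_basis_def pauli_mult_label_def by auto

lemma pauli_mult_phase_phases: "pauli_mult_phase p q \<in> pauli_phases"
  unfolding pauli_phases_def pauli_mult_phase_def by auto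

lemma pauli_phases_mult:
  "a \<in> pauli_phases \<Longrightarrow> b \<in> pauli_phases \<Longrightarrow> a * b \<in> pauli_phases"
  unfolding pauli_phases_def by auto

lemma pauli_phases_simps:
  "1 \<in> pauli_phases" "-1 \<in> pauli_phases" "\<i> \<in> pauli_phases" "-\<i> \<in> pauli_phases"
  unfolding pauli_phases_def by auto

lemma pauli_basis_square: "p \<in> pauli_basis \<Longrightarrow> p * p = pauliI"
  by (elim pauli_basisE) (simp_all add: pauli_mult_table pauliI_mult pauli_basis_def)

lemma pauli_basis_hermitian:
  "p \<in> pauli_basis \<Longrightarrow> a < 2 \<Longrightarrow> b < 2 \<Longrightarrow> cnj (p $$ (a,b)) = p $$ (b,a)"
  by (elim pauli_basisE) (auto simp: nat_less_2_iff pauli_entry_simps)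

lemma pauli_basis_completeness:
  "a < 2 \<Longrightarrow> b < 2 \<Longrightarrow> c < 2 \<Longrightarrow> d < 2 \<Longrightarrow>
   (\<Sum>p\<in>pauli_basis. p $$ (a,b) * p $$ (c,d)) = (if a = d \<and> b = c then 2 else 0)"
  unfolding pauli_basis_def nat_less_2_iff by (auto simp: pauli_entry_simps)

lemma pauli_comm_sign_orthogonal: "p \<in> pauli_basis \<Longrightarrow> q \<in> pauli_basis \<Longrightarrow>
   (\<Sum>w\<in>pauli_basis. pauli_comm_sign w p * pauli_comm_sign w q) = (if p = q then 4 else 0)"
  by (elim pauli_basisE) (simp_all add: pauli_basis_def pauli_comm_sign_def)

lemma pauli_comm_sign_square: "pauli_comm_sign p q * pauli_comm_sign p q = 1"
  unfolding pauli_comm_sign_def by auto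

lemma pauli_comm_sign_I: "pauli_comm_sign pauliI q = 1" "pauli_comm_sign q pauliI = 1"
  unfolding pauli_comm_sign_def by auto

lemma pauli_comm_sign_sym: "pauli_comm_sign p q = pauli_comm_sign q p"
  unfolding pauli_comm_sign_def by auto

lemma pauli_comm_sign_anticommuting_witness:
  "p \<in> pauli_basis \<Longrightarrow> q \<in> pauli_basis \<Longrightarrow> p \<noteq> pauliI \<Longrightarrow> q \<noteq> pauliI \<Longrightarrow>
   \<exists>s\<in>pauli_basis. pauli_comm_sign s p = -1 \<and> pauli_comm_sign s q = -1"
  by (elim pauli_basisE) (auto simp: pauli_basis_def pauli_comm_sign_def)

lemma finite_pauli_basis: "finite pauli_basis" unfolding pauli_basis_def by simp

lemma card_pauli_basis: "card pauli_basis = 4" unfolding pauli_basis_def by simp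

lemma pauliI_in_basis: "pauliI \<in> pauli_basis" unfolding pauli_basis_def by simp

section \<open>Pauli words and their tensor products\<close>

lemma tensor_list_dims[simp]:
  "dim_row (tensor_list ps) = 2 ^ length ps" "dim_col (tensor_list ps) = 2 ^ length ps"
  by (auto simp: tensor_list_def)

lemma tensor_list_carrier: "tensor_list ps \<in> carrier_mat (2 ^ length ps) (2 ^ length ps)"
  unfolding carrier_mat_def by simp

lemma index_tensor_list: "r < 2 ^ length ps \<Longrightarrow> c < 2 ^ length ps \<Longrightarrow>
  tensor_list ps $$ (r,c) = (\<Prod>k<length ps. ps!k $$ (r div 2^k mod 2, c div 2^k mod 2))"
  unfolding tensor_list_def by (subst index_mat(1)) auto

lemma index_smult_mat_2:
  "B \<in> carrier_mat 2 2 \<Longrightarrow> a < 2 \<Longrightarrow> b < 2 \<Longrightarrow> (c \<cdot>\<^sub>m B) $$ (a,b) = c * B $$ (a,b)"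
  by auto

lemma tensor_list_mult:
  assumes len: "length qs = length ps" and P: "\<forall>p\<in>set ps. p \<in> carrier_mat 2 2" and Q: "\<forall>q\<in>set qs. q \<in> carrier_mat 2 2"
  shows "tensor_list ps * tensor_list qs = tensor_list (map2 (*) ps qs)"
proof (rule eq_matI)
  let ?n = "length ps"
  fix i j assume i: "i < dim_row (tensor_list (map2 (*) ps qs))" and j: "j < dim_col (tensor_list (map2 (*) ps qs))"
  then have i': "i < 2^?n" and j': "j < 2^?n" using len by auto
  have Pk: "ps!k \<in> carrier_mat 2 2" and Qk: "qs!k \<in> carrier_mat 2 2" if "k < ?n" for k
    using that P Q len by auto
  have "(tensor_list ps * tensor_list qs) $$ (i,j) = (\<Sum>m<2^?n. tensor_list ps $$ (i,m) * tensor_list qs $$ (m,j))"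
    using i' j' len by (simp add: scalar_prod_def atLeast0LessThan)
  also have "\<dots> = (\<Sum>m<2^?n. \<Prod>k<?n. ps!k $$ (i div 2^k mod 2, m div 2^k mod 2) * qs!k $$ (m div 2^k mod 2, j div 2^k mod 2))"
    using i' j' len by (simp add: index_tensor_list prod.distrib)
  also have "\<dots> = (\<Prod>k<?n. ps!k $$ (i div 2^k mod 2, 0) * qs!k $$ (0, j div 2^k mod 2)
                   + ps!k $$ (i div 2^k mod 2, 1) * qs!k $$ (1, j div 2^k mod 2))"
    by (rule sum_binary_digits_prod)
  also have "\<dots> = (\<Prod>k<?n. (ps!k * qs!k) $$ (i div 2^k mod 2, j div 2^k mod 2))"
    by (rule prod.cong[OF refl], subst index_mult_mat_2[OF Pk Qk]) auto
  also have "\<dots> = tensor_list (map2 (*) ps qs) $$ (i,j)"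
    using i' j' len by (simp add: index_tensor_list)
  finally show "(tensor_list ps * tensor_list qs) $$ (i,j) = tensor_list (map2 (*) ps qs) $$ (i,j)" .
qed (use len in auto)

lemma tensor_list_smult_factors:
  assumes "length As = n" "length Bs = n" "\<forall>k<n. As!k = c k \<cdot>\<^sub>m Bs!k" "\<forall>k<n. Bs!k \<in> carrier_mat 2 2"
  shows "tensor_list As = (\<Prod>k<n. c k) \<cdot>\<^sub>m tensor_list Bs"
proof (rule eq_matI)
  fix i j assume "i < dim_row ((\<Prod>k<n. c k) \<cdot>\<^sub>m tensor_list Bs)" "j < dim_col ((\<Prod>k<n. c k) \<cdot>\<^sub>m tensor_list Bs)"
  then have i: "i < 2^n" "j < 2^n" using assms by auto
  have "tensor_list As $$ (i,j) = (\<Prod>k<n. c k * Bs!k $$ (i div 2^k mod 2, j div 2^k mod 2))"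
    using i assms by (simp add: index_tensor_list index_smult_mat_2)
  also have "\<dots> = (\<Prod>k<n. c k) * tensor_list Bs $$ (i,j)"
    using i assms by (simp add: index_tensor_list prod.distrib)
  finally show "tensor_list As $$ (i,j) = ((\<Prod>k<n. c k) \<cdot>\<^sub>m tensor_list Bs) $$ (i,j)"
    using i assms by simp
qed (use assms in auto)

lemma tensor_list_identity: "tensor_list (replicate n pauliI) = 1\<^sub>m (2^n)"
proof (rule eq_matI)
  fix i j assume "i < dim_row (1\<^sub>m (2^n))" "j < dim_col (1\<^sub>m (2^n) :: complex mat)"
  then have i: "i < 2^n" "j < 2^n" by auto
  have "tensor_list (replicate n pauliI) $$ (i,j) = (\<Prod>k<n. if i div 2^k mod 2 = j div 2^k mod 2 then 1 else 0)"
    using i by (simp add: index_tensor_list pauliI_eq_one)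
  also have "\<dots> = (if i = j then 1 else 0)"
    using binary_digits_eq[OF i] by (auto simp: prod_if_const)
  finally show "tensor_list (replicate n pauliI) $$ (i,j) = 1\<^sub>m (2^n) $$ (i,j)" using i by simp
qed auto

definition pauli_words :: "nat \<Rightarrow> complex mat list set" where
  "pauli_words n = {ps. set ps \<subseteq> pauli_basis \<and> length ps = n}"

lemma pauli_words_length:
  "ps \<in> pauli_words n \<Longrightarrow> length ps = n" by (simp add: pauli_words_def)

lemma pauli_words_nth:
  "ps \<in> pauli_words n \<Longrightarrow> k < n \<Longrightarrow> ps!k \<in> pauli_basis" by (auto simp: pauli_words_def)

lemma pauli_words_carrier_2:
  "ps \<in> pauli_words n \<Longrightarrow> \<forall>p\<in>set ps. p \<in> carrier_mat 2 2"
  using pauli_basis_carrier by (auto simp: pauli_words_def)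

lemma tensor_list_pauli_carrier:
  "ps \<in> pauli_words n \<Longrightarrow> tensor_list ps \<in> carrier_mat (2^n) (2^n)"
  using tensor_list_carrier pauli_words_length by metis

lemma tensor_list_hermitian:
  assumes "ps \<in> pauli_words n"
  shows "dagger (tensor_list ps) = tensor_list ps"
proof (rule eq_matI)
  fix i j assume "i < dim_row (tensor_list ps)" "j < dim_col (tensor_list ps)"
  then have i: "i < 2^n" "j < 2^n" using pauli_words_length[OF assms] by auto
  have "dagger (tensor_list ps) $$ (i,j) = cnj (\<Prod>k<n. ps!k $$ (j div 2^k mod 2, i div 2^k mod 2))"
    using i pauli_words_length[OF assms] by (simp add: index_tensor_list)
  also have "\<dots> = (\<Prod>k<n. ps!k $$ (i div 2^k mod 2, j div 2^k mod 2))"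
    by (simp add: pauli_basis_hermitian pauli_words_nth[OF assms])
  finally show "dagger (tensor_list ps) $$ (i,j) = tensor_list ps $$ (i,j)"
    using i pauli_words_length[OF assms] by (simp add: index_tensor_list)
qed auto

definition comm_sign :: "complex mat list \<Rightarrow> complex mat list \<Rightarrow> complex" where
  "comm_sign ws ps = (\<Prod>k<length ps. pauli_comm_sign (ws!k) (ps!k))"

lemma tensor_list_comm: assumes "ws \<in> pauli_words n" "ps \<in> pauli_words n"
  shows "tensor_list ws * tensor_list ps = comm_sign ws ps \<cdot>\<^sub>m (tensor_list ps * tensor_list ws)"
proof -
  have "tensor_list ws * tensor_list ps = tensor_list (map2 (*) ws ps)"
    using assms by (intro tensor_list_mult) (auto simp: pauli_words_length pauli_words_carrier_2)
  also have "\<dots> = (\<Prod>k<n. pauli_comm_sign (ws!k) (ps!k)) \<cdot>\<^sub>m tensor_list (map2 (*) ps ws)"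
  proof (rule tensor_list_smult_factors)
    show "\<forall>k<n. map2 (*) ws ps ! k = pauli_comm_sign (ws ! k) (ps ! k) \<cdot>\<^sub>m map2 (*) ps ws ! k"
    proof (intro allI impI)
      fix k assume k: "k < n"
      have "ws!k * ps!k = pauli_comm_sign (ws ! k) (ps ! k) \<cdot>\<^sub>m (ps!k * ws!k)"
        by (rule pauli_comm_sign_mult[OF pauli_words_nth[OF assms(1) k] pauli_words_nth[OF assms(2) k]])
      then show "map2 (*) ws ps ! k = pauli_comm_sign (ws ! k) (ps ! k) \<cdot>\<^sub>m map2 (*) ps ws ! k"
        using k assms by (simp add: pauli_words_length)
    qed
    show "\<forall>k<n. map2 (*) ps ws ! k \<in> carrier_mat 2 2"
    proof (intro allI impI)
      fix k assume k: "k < n"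
      have "ps!k \<in> carrier_mat 2 2" "ws!k \<in> carrier_mat 2 2"
        using pauli_basis_carrier pauli_words_nth[OF assms(1) k] pauli_words_nth[OF assms(2) k] by auto
      then show "map2 (*) ps ws ! k \<in> carrier_mat 2 2" using k assms by (simp add: pauli_words_length mult_carrier_mat)
    qed
  qed (use assms in \<open>auto simp: pauli_words_length\<close>)
  also have "tensor_list (map2 (*) ps ws) = tensor_list ps * tensor_list ws"
    using assms by (intro tensor_list_mult[symmetric]) (auto simp: pauli_words_length pauli_words_carrier_2)
  finally show ?thesis using assms by (simp add: comm_sign_def pauli_words_length)
qed

lemma tensor_list_square:
  assumes "ws \<in> pauli_words n"
  shows "tensor_list ws * tensor_list ws = 1\<^sub>m (2^n)"
proof -
  have "tensor_list ws * tensor_list ws = tensor_list (map2 (*) ws ws)"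
    using assms by (intro tensor_list_mult) (auto simp: pauli_words_length pauli_words_carrier_2)
  also have "map2 (*) ws ws = replicate n pauliI"
    using assms by (intro nth_equalityI) (auto simp: pauli_words_length pauli_words_nth pauli_basis_square)
  finally show ?thesis by (simp add: tensor_list_identity)
qed

lemma tensor_list_conj: assumes "ws \<in> pauli_words n" "ps \<in> pauli_words n"
  shows "tensor_list ws * tensor_list ps * tensor_list ws = comm_sign ws ps \<cdot>\<^sub>m tensor_list ps"
proof -
  have c: "tensor_list ws \<in> carrier_mat (2^n) (2^n)" "tensor_list ps \<in> carrier_mat (2^n) (2^n)"
    using assms by (auto simp: tensor_list_pauli_carrier)
  have "tensor_list ws * tensor_list ps * tensor_list ws = (comm_sign ws ps \<cdot>\<^sub>m (tensor_list ps * tensor_list ws)) * tensor_list ws"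
    by (simp add: tensor_list_comm[OF assms])
  also have "\<dots> = comm_sign ws ps \<cdot>\<^sub>m (tensor_list ps * (tensor_list ws * tensor_list ws))"
    using c by (simp add: mult_smult_assoc_mat[of _ "2^n" "2^n"])
  also have "\<dots> = comm_sign ws ps \<cdot>\<^sub>m tensor_list ps"
    using c by (simp add: tensor_list_square[OF assms(1)] right_mult_one_mat)
  finally show ?thesis .
qed

lemma prod_pauli_phases:
  "(\<And>k. k < (n::nat) \<Longrightarrow> f k \<in> pauli_phases) \<Longrightarrow> (\<Prod>k<n. f k) \<in> pauli_phases"
  by (induction n) (auto simp: pauli_phases_simps pauli_phases_mult)

lemma map2_pauli_mult_label_words:
  assumes "ws \<in> pauli_words n" "ps \<in> pauli_words n"
  shows "map2 pauli_mult_label ws ps \<in> pauli_words n"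
proof -
  have "length (map2 pauli_mult_label ws ps) = n" using assms by (simp add: pauli_words_length)
  moreover have "\<forall>k<n. map2 pauli_mult_label ws ps ! k \<in> pauli_basis"
    using assms by (auto simp: pauli_words_length intro!: pauli_mult_label_basis pauli_words_nth)
  ultimately show ?thesis by (auto simp: pauli_words_def in_set_conv_nth)
qed

lemma tensor_list_mult_pauli: assumes "ws \<in> pauli_words n" "ps \<in> pauli_words n"
  shows "tensor_list ws * tensor_list ps = (\<Prod>k<n. pauli_mult_phase (ws!k) (ps!k)) \<cdot>\<^sub>m tensor_list (map2 pauli_mult_label ws ps)"
    and "map2 pauli_mult_label ws ps \<in> pauli_words n" and "(\<Prod>k<n. pauli_mult_phase (ws!k) (ps!k)) \<in> pauli_phases"
proof -
  have "tensor_list ws * tensor_list ps = tensor_list (map2 (*) ws ps)"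
    using assms by (intro tensor_list_mult) (auto simp: pauli_words_length pauli_words_carrier_2)
  also have "\<dots> = (\<Prod>k<n. pauli_mult_phase (ws!k) (ps!k)) \<cdot>\<^sub>m tensor_list (map2 pauli_mult_label ws ps)"
  proof (rule tensor_list_smult_factors)
    show "\<forall>k<n. map2 (*) ws ps ! k = pauli_mult_phase (ws ! k) (ps ! k) \<cdot>\<^sub>m map2 pauli_mult_label ws ps ! k"
    proof (intro allI impI)
      fix k assume k: "k < n"
      have "ws!k * ps!k = pauli_mult_phase (ws ! k) (ps ! k) \<cdot>\<^sub>m pauli_mult_label (ws!k) (ps!k)"
        by (rule pauli_mult_eq[OF pauli_words_nth[OF assms(1) k] pauli_words_nth[OF assms(2) k]])
      then show "map2 (*) ws ps ! k = pauli_mult_phase (ws ! k) (ps ! k) \<cdot>\<^sub>m map2 pauli_mult_label ws ps ! k"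
        using k assms by (simp add: pauli_words_length)
    qed
    show "\<forall>k<n. map2 pauli_mult_label ws ps ! k \<in> carrier_mat 2 2"
    proof (intro allI impI)
      fix k assume k: "k < n"
      have "pauli_mult_label (ws!k) (ps!k) \<in> pauli_basis" using pauli_mult_label_basis pauli_words_nth[OF assms(1) k] pauli_words_nth[OF assms(2) k] by auto
      then show "map2 pauli_mult_label ws ps ! k \<in> carrier_mat 2 2" using k assms pauli_basis_carrier by (simp add: pauli_words_length)
    qed
  qed (use assms in \<open>auto simp: pauli_words_length\<close>)
  finally show "tensor_list ws * tensor_list ps = (\<Prod>k<n. pauli_mult_phase (ws!k) (ps!k)) \<cdot>\<^sub>m tensor_list (map2 pauli_mult_label ws ps)" .
  show "map2 pauli_mult_label ws ps \<in> pauli_words n" by (rule map2_pauli_mult_label_words[OF assms])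
  show "(\<Prod>k<n. pauli_mult_phase (ws!k) (ps!k)) \<in> pauli_phases" by (rule prod_pauli_phases) (simp add: pauli_mult_phase_phases)
qed

lemma comm_sign_square: "comm_sign ws ps * comm_sign ws ps = 1"
  unfolding comm_sign_def by (simp add: prod.distrib[symmetric] pauli_comm_sign_square)

lemma comm_sign_cases: "comm_sign ws ps = 1 \<or> comm_sign ws ps = -1"
proof -
  have "(comm_sign ws ps - 1) * (comm_sign ws ps + 1) = 0" using comm_sign_square[of ws ps] by (simp add: algebra_simps)
  then have "comm_sign ws ps - 1 = 0 \<or> comm_sign ws ps + 1 = 0" by simp
  then show ?thesis
  proof
    assume "comm_sign ws ps - 1 = 0" then show ?thesis by simp
  next
    assume "comm_sign ws ps + 1 = 0" then have "comm_sign ws ps = -1" by (simp add: eq_neg_iff_add_eq_0)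
    then show ?thesis by simp
  qed
qed

lemma pauli_words_completeness: assumes "i < 2^n" "j < 2^n" "k < 2^n" "l < 2^n"
  shows "(\<Sum>P\<in>pauli_words n. tensor_list P $$ (i,j) * tensor_list P $$ (k,l)) = (if i = l \<and> j = k then 2^n else 0)"
proof -
  let ?b = "\<lambda>x m. x div 2^m mod (2::nat)"
  have "(\<Sum>P\<in>pauli_words n. tensor_list P $$ (i,j) * tensor_list P $$ (k,l))
      = (\<Sum>P\<in>pauli_words n. \<Prod>m<n. P!m $$ (?b i m, ?b j m) * P!m $$ (?b k m, ?b l m))"
    using assms by (intro sum.cong refl) (simp add: index_tensor_list pauli_words_length prod.distrib)
  also have "\<dots> = (\<Prod>m<n. \<Sum>p\<in>pauli_basis. p $$ (?b i m, ?b j m) * p $$ (?b k m, ?b l m))"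
    unfolding pauli_words_def by (rule sum_lists_length_prod[OF finite_pauli_basis])
  also have "\<dots> = (\<Prod>m<n. if ?b i m = ?b l m \<and> ?b j m = ?b k m then 2 else 0)"
    by (simp add: pauli_basis_completeness)
  also have "\<dots> = (if i = l \<and> j = k then 2^n else 0)"
    using binary_digits_eq[OF assms(1) assms(4)] binary_digits_eq[OF assms(2) assms(3)] by (auto simp: prod_if_const)
  finally show ?thesis .
qed

lemma comm_sign_orthogonal: assumes "P \<in> pauli_words n" "Q \<in> pauli_words n"
  shows "(\<Sum>W\<in>pauli_words n. comm_sign W P * comm_sign W Q) = (if P = Q then 4^n else 0)"
proof -
  have "(\<Sum>W\<in>pauli_words n. comm_sign W P * comm_sign W Q) = (\<Sum>W\<in>pauli_words n. \<Prod>m<n. pauli_comm_sign (W!m) (P!m) * pauli_comm_sign (W!m) (Q!m))"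
    using assms by (simp add: comm_sign_def pauli_words_length prod.distrib)
  also have "\<dots> = (\<Prod>m<n. \<Sum>w\<in>pauli_basis. pauli_comm_sign w (P!m) * pauli_comm_sign w (Q!m))"
    unfolding pauli_words_def by (rule sum_lists_length_prod[OF finite_pauli_basis])
  also have "\<dots> = (\<Prod>m<n. if P!m = Q!m then 4 else 0)"
    using assms by (simp add: pauli_comm_sign_orthogonal pauli_words_nth)
  also have "\<dots> = (if P = Q then 4^n else 0)"
    using assms by (auto simp: prod_if_const pauli_words_length intro: nth_equalityI)
  finally show ?thesis .
qed

lemma comm_sign_sym:
  assumes "a \<in> pauli_words n" "b \<in> pauli_words n"
  shows "comm_sign a b = comm_sign b a"
  using assms by (simp add: comm_sign_def pauli_comm_sign_sym pauli_words_length)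

lemma comm_sign_identity: "comm_sign W (replicate n pauliI) = 1"
  unfolding comm_sign_def by (simp add: pauli_comm_sign_I)

lemma finite_pauli_words: "finite (pauli_words n)"
  unfolding pauli_words_def by (rule finite_lists_length_eq[OF finite_pauli_basis])

lemma card_pauli_words: "card (pauli_words n) = 4^n"
  unfolding pauli_words_def by (simp add: card_lists_length_eq finite_pauli_basis card_pauli_basis)

lemma identity_pauli_word:
  "replicate n pauliI \<in> pauli_words n" by (auto simp: pauli_words_def pauliI_in_basis)

lemma pauli_word_non_identity:
  assumes "a \<in> pauli_words n" "a \<noteq> replicate n pauliI"
  shows "\<exists>k<n. a!k \<noteq> pauliI"
proof (rule ccontr)
  assume "\<not> (\<exists>k<n. a!k \<noteq> pauliI)"
  then have "a = replicate n pauliI" using assms(1) by (intro nth_equalityI) (auto simp: pauli_words_length)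
  then show False using assms(2) by simp
qed

lemma pauli_word_update:
  "r \<in> pauli_words n \<Longrightarrow> s \<in> pauli_basis \<Longrightarrow> r[k := s] \<in> pauli_words n"
  by (auto simp: pauli_words_def dest: subsetD[OF set_update_subset_insert])

lemma comm_sign_identity_left: "c \<in> pauli_words n \<Longrightarrow> comm_sign (replicate n pauliI) c = 1"
  unfolding comm_sign_def by (simp add: pauli_words_length pauli_comm_sign_I)

lemma comm_sign_update_identity:
  assumes c: "c \<in> pauli_words n" and r: "length r = n" "r!k = pauliI" and k: "k < n"
  shows "comm_sign (r[k := s]) c = pauli_comm_sign s (c!k) * comm_sign r c"
proof -
  let ?g = "\<lambda>j. pauli_comm_sign (r!j) (c!j)"
  have "(\<Prod>j\<in>{..<n}-{k}. pauli_comm_sign (r[k := s]!j) (c!j)) = (\<Prod>j\<in>{..<n}-{k}. ?g j)"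
    by (intro prod.cong) auto
  then have "comm_sign (r[k := s]) c = pauli_comm_sign s (c!k) * (\<Prod>j\<in>{..<n}-{k}. ?g j)"
    unfolding comm_sign_def pauli_words_length[OF c] using k r
    by (simp add: prod.remove[of _ k] del: nth_list_update)
  also have "(\<Prod>j\<in>{..<n}-{k}. ?g j) = comm_sign r c"
    unfolding comm_sign_def pauli_words_length[OF c] using k r
    by (simp add: prod.remove[of _ k] pauli_comm_sign_I)
  finally show ?thesis .
qed

lemma exists_common_anticommuting_word:
  assumes a: "a \<in> pauli_words n" "a \<noteq> replicate n pauliI"
    and b: "b \<in> pauli_words n" "b \<noteq> replicate n pauliI"
  shows "\<exists>r\<in>pauli_words n. comm_sign r a = -1 \<and> comm_sign r b = -1"
proof (cases "\<exists>k<n. a!k \<noteq> pauliI \<and> b!k \<noteq> pauliI")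
  case True
  then obtain k where k: "k < n" "a!k \<noteq> pauliI" "b!k \<noteq> pauliI" by blast
  obtain s where s: "s \<in> pauli_basis" "pauli_comm_sign s (a!k) = -1" "pauli_comm_sign s (b!k) = -1"
    using pauli_comm_sign_anticommuting_witness[OF pauli_words_nth[OF a(1) k(1)] pauli_words_nth[OF b(1) k(1)] k(2,3)]
    by blast
  let ?r = "(replicate n pauliI)[k := s]"
  have e: "comm_sign ?r c = pauli_comm_sign s (c!k)" if "c \<in> pauli_words n" for c
    using comm_sign_update_identity[OF that _ _ k(1)] comm_sign_identity_left[OF that] k(1) by simp
  have "?r \<in> pauli_words n" using pauli_word_update[OF identity_pauli_word s(1)] .
  then show ?thesis using e[OF a(1)] e[OF b(1)] s by auto
next
  case False
  obtain k where k: "k < n" "a!k \<noteq> pauliI" using pauli_word_non_identity[OF a] by blast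
  obtain l where l: "l < n" "b!l \<noteq> pauliI" using pauli_word_non_identity[OF b] by blast
  have bk: "b!k = pauliI" and al: "a!l = pauliI" using False k l by blast+
  then have kl: "k \<noteq> l" using k by auto
  obtain s where s: "s \<in> pauli_basis" "pauli_comm_sign s (a!k) = -1"
    using pauli_comm_sign_anticommuting_witness[OF pauli_words_nth[OF a(1) k(1)] pauli_words_nth[OF a(1) k(1)] k(2) k(2)]
    by blast
  obtain t where t: "t \<in> pauli_basis" "pauli_comm_sign t (b!l) = -1"
    using pauli_comm_sign_anticommuting_witness[OF pauli_words_nth[OF b(1) l(1)] pauli_words_nth[OF b(1) l(1)] l(2) l(2)]
    by blast
  let ?r = "(replicate n pauliI)[k := s, l := t]"
  have e: "comm_sign ?r c = pauli_comm_sign t (c!l) * pauli_comm_sign s (c!k)" if "c \<in> pauli_words n" for c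
    using comm_sign_update_identity[OF that _ _ l(1), of "(replicate n pauliI)[k := s]" t]
      comm_sign_update_identity[OF that _ _ k(1), of "replicate n pauliI" s]
      comm_sign_identity_left[OF that] k(1) l(1) kl by simp
  have "?r \<in> pauli_words n" using pauli_word_update[OF pauli_word_update[OF identity_pauli_word s(1)] t(1)] .
  then show ?thesis using e[OF a(1)] e[OF b(1)] s t bk al by (auto simp: pauli_comm_sign_I)
qed

section \<open>The Pauli group and the Clifford group\<close>

lemma pauli_group_iff:
  "P \<in> pauli_group n \<longleftrightarrow> (\<exists>c ps. c \<in> pauli_phases \<and> ps \<in> pauli_words n \<and> P = c \<cdot>\<^sub>m tensor_list ps)"
  unfolding pauli_group_def pauli_phases_def pauli_words_def pauli_basis_def by blast

lemma pauli_group_carrier: "P \<in> pauli_group n \<Longrightarrow> P \<in> carrier_mat (2^n) (2^n)"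
  unfolding pauli_group_iff using tensor_list_pauli_carrier by auto

lemma pauli_group_smult:
  assumes "c \<in> pauli_phases" "P \<in> pauli_group n"
  shows "c \<cdot>\<^sub>m P \<in> pauli_group n"
proof -
  from assms(2) obtain d ps where d: "d \<in> pauli_phases" "ps \<in> pauli_words n" "P = d \<cdot>\<^sub>m tensor_list ps" unfolding pauli_group_iff by blast
  then have "c \<cdot>\<^sub>m P = (c*d) \<cdot>\<^sub>m tensor_list ps" by (simp add: smult_smult_mat)
  then show ?thesis unfolding pauli_group_iff using d assms(1) pauli_phases_mult by blast
qed

lemma tensor_list_in_pauli_group:
  "ps \<in> pauli_words n \<Longrightarrow> tensor_list ps \<in> pauli_group n"
  unfolding pauli_group_iff using pauli_phases_simps(1) one_smult_mat by metis

lemma pauli_group_mult: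
  assumes "P \<in> pauli_group n" "Q \<in> pauli_group n"
  shows "P * Q \<in> pauli_group n"
proof -
  from assms(1) obtain c ps where c: "c \<in> pauli_phases" "ps \<in> pauli_words n" "P = c \<cdot>\<^sub>m tensor_list ps" unfolding pauli_group_iff by blast
  from assms(2) obtain d qs where d: "d \<in> pauli_phases" "qs \<in> pauli_words n" "Q = d \<cdot>\<^sub>m tensor_list qs" unfolding pauli_group_iff by blast
  have cr: "tensor_list ps \<in> carrier_mat (2^n) (2^n)" "tensor_list qs \<in> carrier_mat (2^n) (2^n)"
    using c d tensor_list_pauli_carrier by auto
  have "P * Q = (c * d) \<cdot>\<^sub>m (tensor_list ps * tensor_list qs)"
    using c d carrier_dims[OF cr(1)] carrier_dims[OF cr(2)] by (simp add: smult_mult_simps mult.commute)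
  also have "\<dots> = (c * d * (\<Prod>k<n. pauli_mult_phase (ps!k) (qs!k))) \<cdot>\<^sub>m tensor_list (map2 pauli_mult_label ps qs)"
    using tensor_list_mult_pauli(1)[OF c(2) d(2)] by (simp add: smult_smult_mat)
  finally show ?thesis unfolding pauli_group_iff using tensor_list_mult_pauli(2,3)[OF c(2) d(2)] c d pauli_phases_mult by blast
qed

lemma comm_sign_phases: "comm_sign ws ps \<in> pauli_phases"
  using comm_sign_cases[of ws ps] pauli_phases_simps by auto

lemma cliffordD: assumes "U \<in> clifford n"
  shows "U \<in> carrier_mat (2^n) (2^n)" "dagger U * U = 1\<^sub>m (2^n)" "U * dagger U = 1\<^sub>m (2^n)"
    and "\<And>P. P \<in> pauli_group n \<Longrightarrow> U * P * dagger U \<in> pauli_group n"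
proof -
  show U: "U \<in> carrier_mat (2^n) (2^n)" "dagger U * U = 1\<^sub>m (2^n)"
    using assms by (auto simp: clifford_def unitary_mat_def)
  show "U * dagger U = 1\<^sub>m (2^n)"
    by (rule mat_mult_left_right_inverse[OF dagger_carrier[OF U(1)] U(1) U(2)])
  show "\<And>P. P \<in> pauli_group n \<Longrightarrow> U * P * dagger U \<in> pauli_group n"
    using assms by (auto simp: clifford_def)
qed

lemma cliffordI: assumes "U \<in> carrier_mat (2^n) (2^n)" "dagger U * U = 1\<^sub>m (2^n)"
    "\<And>P. P \<in> pauli_group n \<Longrightarrow> U * P * dagger U \<in> pauli_group n"
  shows "U \<in> clifford n"
  using assms by (auto simp: clifford_def unitary_mat_def)

lemma tensor_list_clifford: assumes "ws \<in> pauli_words n" shows "tensor_list ws \<in> clifford n"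
proof (rule cliffordI)
  have W: "tensor_list ws \<in> carrier_mat (2^n) (2^n)" using tensor_list_pauli_carrier[OF assms] .
  then show "tensor_list ws \<in> carrier_mat (2^n) (2^n)" .
  show "dagger (tensor_list ws) * tensor_list ws = 1\<^sub>m (2^n)"
    using tensor_list_hermitian[OF assms] tensor_list_square[OF assms] by simp
  fix P assume "P \<in> pauli_group n"
  then obtain c ps where c: "c \<in> pauli_phases" "ps \<in> pauli_words n" "P = c \<cdot>\<^sub>m tensor_list ps" unfolding pauli_group_iff by blast
  have Pc: "tensor_list ps \<in> carrier_mat (2^n) (2^n)" using tensor_list_pauli_carrier[OF c(2)] .
  have "tensor_list ws * P * dagger (tensor_list ws) = c \<cdot>\<^sub>m (tensor_list ws * tensor_list ps * tensor_list ws)"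
    using c carrier_dims[OF W] carrier_dims[OF Pc] tensor_list_hermitian[OF assms] by (simp add: smult_mult_simps)
  also have "\<dots> = (c * comm_sign ws ps) \<cdot>\<^sub>m tensor_list ps"
    using tensor_list_conj[OF assms c(2)] carrier_dims[OF W] carrier_dims[OF Pc] by (simp add: smult_mult_simps)
  finally show "tensor_list ws * P * dagger (tensor_list ws) \<in> pauli_group n"
    using pauli_group_smult[OF pauli_phases_mult[OF c(1) comm_sign_phases] tensor_list_in_pauli_group[OF c(2)]] by simp
qed

lemma clifford_mult:
  assumes "U \<in> clifford n" "V \<in> clifford n"
  shows "U * V \<in> clifford n"
proof (rule cliffordI)
  note U = cliffordD[OF assms(1)] and V = cliffordD[OF assms(2)]
  show "U * V \<in> carrier_mat (2^n) (2^n)" using U V by simp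
  have dU: "dagger U \<in> carrier_mat (2^n) (2^n)" "dagger V \<in> carrier_mat (2^n) (2^n)"
    using U V dagger_carrier by auto
  have "dagger (U * V) * (U * V) = (dagger V * dagger U) * (U * V)"
    using U V by (simp add: dagger_mult[of _ "2^n" "2^n" _ "2^n"])
  also have "\<dots> = dagger V * (dagger U * (U * V))"
    by (rule assoc_mult_mat[OF dU(2) dU(1) mult_carrier_mat[OF U(1) V(1)]])
  also have "dagger U * (U * V) = (dagger U * U) * V"
    by (rule assoc_mult_mat[OF dU(1) U(1) V(1), symmetric])
  finally show "dagger (U * V) * (U * V) = 1\<^sub>m (2^n)" using U V by simp
  fix P assume P: "P \<in> pauli_group n"
  have "U * V * P * dagger (U * V) = U * (V * P * dagger V) * dagger U"
    using U V carrier_dims[OF U(1)] carrier_dims[OF V(1)] carrier_dims[OF pauli_group_carrier[OF P]]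
    by (simp add: dagger_mult[of _ "2^n" "2^n" _ "2^n"] smult_mult_simps)
  then show "U * V * P * dagger (U * V) \<in> pauli_group n" using U(4)[OF V(4)[OF P]] by simp
qed

lemma clifford_smult_phase:
  assumes "U \<in> clifford n" "cmod c = 1"
  shows "c \<cdot>\<^sub>m U \<in> clifford n"
proof (rule cliffordI)
  note U = cliffordD[OF assms(1)]
  show "c \<cdot>\<^sub>m U \<in> carrier_mat (2^n) (2^n)" using U by simp
  show "dagger (c \<cdot>\<^sub>m U) * (c \<cdot>\<^sub>m U) = 1\<^sub>m (2^n)"
    using U cnj_mult_self_unit[OF assms(2)] carrier_dims[OF U(1)]
    by (simp add: dagger_smult smult_mult_simps one_smult_mat mult.commute)
  fix P assume P: "P \<in> pauli_group n"
  have "c \<cdot>\<^sub>m U * P * dagger (c \<cdot>\<^sub>m U) = (c * cnj c) \<cdot>\<^sub>m (U * P * dagger U)"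
    using U carrier_dims[OF U(1)] carrier_dims[OF pauli_group_carrier[OF P]]
    by (simp add: dagger_smult smult_mult_simps mult.commute)
  then show "c \<cdot>\<^sub>m U * P * dagger (c \<cdot>\<^sub>m U) \<in> pauli_group n"
    using U(4)[OF P] cnj_mult_self_unit[OF assms(2)] by (simp add: mult.commute one_smult_mat)
qed

lemma finite_pauli_phases: "finite pauli_phases" unfolding pauli_phases_def by simp

lemma finite_pauli_group: "finite (pauli_group n)"
proof -
  have "pauli_group n \<subseteq> (\<lambda>(c,ps). c \<cdot>\<^sub>m tensor_list ps) ` (pauli_phases \<times> pauli_words n)"
  proof
    fix P assume "P \<in> pauli_group n"
    then obtain c ps where "c \<in> pauli_phases" "ps \<in> pauli_words n" "P = c \<cdot>\<^sub>m tensor_list ps" unfolding pauli_group_iff by blast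
    then show "P \<in> (\<lambda>(c,ps). c \<cdot>\<^sub>m tensor_list ps) ` (pauli_phases \<times> pauli_words n)" by force
  qed
  moreover have "finite ((\<lambda>(c,ps). c \<cdot>\<^sub>m tensor_list ps) ` (pauli_phases \<times> pauli_words n))"
    using finite_pauli_phases finite_pauli_words by simp
  ultimately show ?thesis by (rule finite_subset)
qed

section \<open>Pauli rotations\<close>

lemma sandwich_sum_expand:
  fixes A B M K :: "complex mat"
  assumes c: "A \<in> carrier_mat N N" "B \<in> carrier_mat N N" "M \<in> carrier_mat N N" "K \<in> carrier_mat N N"
    and h: "A * M * A = x \<cdot>\<^sub>m M" "B * M * B = y \<cdot>\<^sub>m M" "A * M * B = x \<cdot>\<^sub>m K" "B * M * A = (-y) \<cdot>\<^sub>m K"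
  shows "(s \<cdot>\<^sub>m (A + B)) * M * (s \<cdot>\<^sub>m (A + B)) = (s*s) \<cdot>\<^sub>m ((x+y) \<cdot>\<^sub>m M + (x-y) \<cdot>\<^sub>m K)"
proof -
  have "(s \<cdot>\<^sub>m (A + B)) * M * (s \<cdot>\<^sub>m (A + B)) = (s*s) \<cdot>\<^sub>m ((A + B) * M * (A + B))"
    using carrier_dims[OF c(1)] carrier_dims[OF c(2)] carrier_dims[OF c(3)] by (simp add: smult_mult_left smult_mult_right smult_smult_mat)
  also have "(A + B) * M * (A + B) = A * M * A + A * M * B + (B * M * A + B * M * B)"
  proof -
    have "(A + B) * M * (A + B) = A * M * A + B * M * A + (A * M * B + B * M * B)"
      using c by (simp add: add_mult_distrib_mat[of _ N N] mult_add_distrib_mat[of _ N N])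
    also have "\<dots> = A * M * A + A * M * B + (B * M * A + B * M * B)"
      by (rule eq_matI) (use c in \<open>simp_all add: add_ac\<close>)
    finally show ?thesis .
  qed
  also have "\<dots> = (x+y) \<cdot>\<^sub>m M + (x-y) \<cdot>\<^sub>m K"
    unfolding h by (rule eq_matI) (use c in \<open>auto simp: algebra_simps\<close>)
  finally show ?thesis .
qed

definition pauli_rotation :: "complex mat list \<Rightarrow> complex mat list \<Rightarrow> complex mat" where
  "pauli_rotation a b = complex_of_real (1 / sqrt 2) \<cdot>\<^sub>m (tensor_list a + tensor_list b)"

lemma inv_sqrt2_square: "complex_of_real (1 / sqrt 2) * complex_of_real (1 / sqrt 2) = 1/2"
  by (simp flip: of_real_mult)

context
  fixes n a b
  assumes a: "a \<in> pauli_words n" and b: "b \<in> pauli_words n" and ab: "comm_sign a b = -1"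
begin

private lemma length_a: "length a = n" using pauli_words_length[OF a] .

private lemma length_b: "length b = n" using pauli_words_length[OF b] .

private lemma comm_sign_b_a: "comm_sign b a = -1" using comm_sign_sym[OF a b] ab by simp

private lemma carrier_a: "tensor_list a \<in> carrier_mat (2^n) (2^n)" using tensor_list_pauli_carrier[OF a] .

private lemma carrier_b: "tensor_list b \<in> carrier_mat (2^n) (2^n)" using tensor_list_pauli_carrier[OF b] .

lemma pauli_rotation_carrier: "pauli_rotation a b \<in> carrier_mat (2^n) (2^n)"
  unfolding pauli_rotation_def using carrier_a carrier_b by simp

lemma pauli_rotation_hermitian: "dagger (pauli_rotation a b) = pauli_rotation a b"
  unfolding pauli_rotation_def using carrier_a carrier_b by (simp add: dagger_smult dagger_add tensor_list_hermitian[OF a] tensor_list_hermitian[OF b])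

lemma pauli_rotation_anticommute:
  "tensor_list b * tensor_list a = (-1) \<cdot>\<^sub>m (tensor_list a * tensor_list b)"
  using tensor_list_comm[OF b a] comm_sign_sym[OF a b] ab by simp

lemma pauli_rotation_sandwich:
  assumes M: "M \<in> carrier_mat (2^n) (2^n)" "K \<in> carrier_mat (2^n) (2^n)"
    and h: "tensor_list a * M * tensor_list a = x \<cdot>\<^sub>m M" "tensor_list b * M * tensor_list b = y \<cdot>\<^sub>m M"
      "tensor_list a * M * tensor_list b = x \<cdot>\<^sub>m K" "tensor_list b * M * tensor_list a = (-y) \<cdot>\<^sub>m K"
  shows "pauli_rotation a b * M * pauli_rotation a b = (1/2) \<cdot>\<^sub>m ((x+y) \<cdot>\<^sub>m M + (x-y) \<cdot>\<^sub>m K)"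
  unfolding pauli_rotation_def using sandwich_sum_expand[OF carrier_a carrier_b M h] inv_sqrt2_square by simp

lemma pauli_rotation_square: "pauli_rotation a b * pauli_rotation a b = 1\<^sub>m (2^n)"
proof -
  have one: "tensor_list a * 1\<^sub>m (2^n) * tensor_list a = 1 \<cdot>\<^sub>m 1\<^sub>m (2^n)"
    "tensor_list b * 1\<^sub>m (2^n) * tensor_list b = 1 \<cdot>\<^sub>m 1\<^sub>m (2^n)"
    "tensor_list a * 1\<^sub>m (2^n) * tensor_list b = 1 \<cdot>\<^sub>m (tensor_list a * tensor_list b)"
    "tensor_list b * 1\<^sub>m (2^n) * tensor_list a = (-1) \<cdot>\<^sub>m (tensor_list a * tensor_list b)"
    using carrier_a carrier_b tensor_list_square[OF a] tensor_list_square[OF b] pauli_rotation_anticommute pauli_words_length[OF a] pauli_words_length[OF b] by (simp_all add: one_smult_mat)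
  have "pauli_rotation a b * 1\<^sub>m (2^n) * pauli_rotation a b = (1/2) \<cdot>\<^sub>m ((1+1) \<cdot>\<^sub>m 1\<^sub>m (2^n) + (1-1) \<cdot>\<^sub>m (tensor_list a * tensor_list b))"
    using pauli_rotation_sandwich[OF one_carrier_mat mult_carrier_mat[OF carrier_a carrier_b] one] .
  also have "\<dots> = 1\<^sub>m (2^n)"
    by (rule eq_matI) (use carrier_a carrier_b length_a length_b in auto)
  finally show ?thesis using pauli_rotation_carrier by simp
qed

lemma pauli_rotation_conj: "pauli_rotation a b * tensor_list a * pauli_rotation a b = tensor_list b"
proof -
  have h: "tensor_list a * tensor_list a * tensor_list a = 1 \<cdot>\<^sub>m tensor_list a"
    "tensor_list b * tensor_list a * tensor_list b = (-1) \<cdot>\<^sub>m tensor_list a"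
    "tensor_list a * tensor_list a * tensor_list b = 1 \<cdot>\<^sub>m tensor_list b"
    "tensor_list b * tensor_list a * tensor_list a = (- (-1)) \<cdot>\<^sub>m tensor_list b"
    using tensor_list_conj[OF b a] comm_sign_b_a tensor_list_square[OF a] carrier_a carrier_b length_a length_b
    by (simp_all add: one_smult_mat assoc_mult_mat[OF carrier_b carrier_a carrier_a])
  have "pauli_rotation a b * tensor_list a * pauli_rotation a b = (1/2) \<cdot>\<^sub>m ((1+(-1)) \<cdot>\<^sub>m tensor_list a + (1-(-1)) \<cdot>\<^sub>m tensor_list b)"
    by (rule pauli_rotation_sandwich[OF carrier_a carrier_b h])
  also have "\<dots> = tensor_list b"
    by (rule eq_matI) (use carrier_a carrier_b length_a length_b in auto)
  finally show ?thesis .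
qed

lemma pauli_rotation_conj_pauli: assumes p: "p \<in> pauli_words n"
  shows "pauli_rotation a b * tensor_list p * pauli_rotation a b \<in> pauli_group n"
proof -
  let ?A = "tensor_list a" and ?B = "tensor_list b" and ?M = "tensor_list p"
  let ?x = "comm_sign a p" and ?y = "comm_sign b p"
  have cM: "?M \<in> carrier_mat (2^n) (2^n)" using tensor_list_pauli_carrier[OF p] .
  note d = carrier_dims[OF carrier_a] carrier_dims[OF carrier_b] carrier_dims[OF cM]
  have h1: "?A * ?M * ?A = ?x \<cdot>\<^sub>m ?M" by (rule tensor_list_conj[OF a p])
  have h2: "?B * ?M * ?B = ?y \<cdot>\<^sub>m ?M" by (rule tensor_list_conj[OF b p])
  have h3: "?A * ?M * ?B = ?x \<cdot>\<^sub>m (?M * ?A * ?B)"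
    using tensor_list_comm[OF a p] d by (simp add: smult_mult_left)
  have "?B * ?M * ?A = ?y \<cdot>\<^sub>m (?M * (?B * ?A))"
    using tensor_list_comm[OF b p] d by (simp add: smult_mult_left assoc_mult_dims)
  also have "\<dots> = (-?y) \<cdot>\<^sub>m (?M * ?A * ?B)"
    using pauli_rotation_anticommute d by (simp add: smult_mult_right smult_smult_mat assoc_mult_dims)
  finally have h4: "?B * ?M * ?A = (-?y) \<cdot>\<^sub>m (?M * ?A * ?B)" .
  have e: "pauli_rotation a b * ?M * pauli_rotation a b = (1/2) \<cdot>\<^sub>m ((?x+?y) \<cdot>\<^sub>m ?M + (?x-?y) \<cdot>\<^sub>m (?M * ?A * ?B))"
    by (rule pauli_rotation_sandwich[OF cM _ h1 h2 h3 h4]) (use cM carrier_a carrier_b in simp)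
  have MAB: "?M * ?A * ?B \<in> pauli_group n"
    using pauli_group_mult[OF pauli_group_mult[OF tensor_list_in_pauli_group[OF p] tensor_list_in_pauli_group[OF a]] tensor_list_in_pauli_group[OF b]] .
  from comm_sign_cases[of a p] comm_sign_cases[of b p] consider "?x = ?y" | "?y = - ?x" by fastforce
  then show ?thesis
  proof cases
    case 1
    have "pauli_rotation a b * ?M * pauli_rotation a b = ?x \<cdot>\<^sub>m ?M"
      unfolding e 1 by (rule eq_matI) (use cM carrier_a carrier_b length_a length_b pauli_words_length[OF p] in auto)
    then show ?thesis using pauli_group_smult[OF comm_sign_phases tensor_list_in_pauli_group[OF p]] 1 by simp
  next
    case 2
    have "pauli_rotation a b * ?M * pauli_rotation a b = ?x \<cdot>\<^sub>m (?M * ?A * ?B)"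
      unfolding e 2 by (rule eq_matI) (use cM carrier_a carrier_b length_a length_b pauli_words_length[OF p] in auto)
    then show ?thesis using pauli_group_smult[OF comm_sign_phases MAB] by simp
  qed
qed

lemma pauli_rotation_clifford: "pauli_rotation a b \<in> clifford n"
proof (rule cliffordI)
  show "pauli_rotation a b \<in> carrier_mat (2^n) (2^n)" by (rule pauli_rotation_carrier)
  show "dagger (pauli_rotation a b) * pauli_rotation a b = 1\<^sub>m (2^n)" by (simp add: pauli_rotation_hermitian pauli_rotation_square)
  fix P assume "P \<in> pauli_group n"
  then obtain c ps where c: "c \<in> pauli_phases" "ps \<in> pauli_words n" "P = c \<cdot>\<^sub>m tensor_list ps" unfolding pauli_group_iff by blast
  have cP: "tensor_list ps \<in> carrier_mat (2^n) (2^n)" using tensor_list_pauli_carrier[OF c(2)] .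
  have "pauli_rotation a b * P * dagger (pauli_rotation a b) = c \<cdot>\<^sub>m (pauli_rotation a b * tensor_list ps * pauli_rotation a b)"
    using c carrier_dims[OF cP] carrier_dims[OF pauli_rotation_carrier] by (simp add: pauli_rotation_hermitian smult_mult_left smult_mult_right)
  then show "pauli_rotation a b * P * dagger (pauli_rotation a b) \<in> pauli_group n"
    using pauli_group_smult[OF c(1) pauli_rotation_conj_pauli[OF c(2)]] by simp
qed

end

section \<open>Pauli expansion and twirling\<close>

definition conj_diag :: "nat \<Rightarrow> complex mat \<Rightarrow> complex mat \<Rightarrow> complex" where
  "conj_diag x U M = (U * M * dagger U) $$ (x,x)"

lemma conj_diag_expand: assumes "U \<in> carrier_mat N N" "M \<in> carrier_mat N N" "x < N"
  shows "conj_diag x U M = (\<Sum>i<N. \<Sum>j<N. U $$ (x,i) * M $$ (i,j) * cnj (U $$ (x,j)))"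
  unfolding conj_diag_def using assms by (subst index_mult3_square[of _ N]) (auto intro: dagger_carrier)

definition pauli_pairing :: "nat \<Rightarrow> (nat \<Rightarrow> nat \<Rightarrow> complex) \<Rightarrow> complex mat list \<Rightarrow> complex" where
  "pauli_pairing n \<alpha> P = (\<Sum>i<2^n. \<Sum>j<2^n. \<alpha> i j * tensor_list P $$ (i,j))"

lemma sum_pauli_pairing_mult:
  "(\<Sum>P\<in>pauli_words n. pauli_pairing n \<alpha> P * pauli_pairing n \<beta> P) = 2^n * (\<Sum>i<2^n. \<Sum>j<2^n. \<alpha> i j * \<beta> j i)"
proof -
  let ?N = "2^n :: nat"
  have "(\<Sum>P\<in>pauli_words n. pauli_pairing n \<alpha> P * pauli_pairing n \<beta> P)
      = (\<Sum>P\<in>pauli_words n. \<Sum>i<?N. \<Sum>k<?N. \<Sum>j<?N. \<Sum>l<?N. (\<alpha> i j * \<beta> k l) * (tensor_list P $$ (i,j) * tensor_list P $$ (k,l)))"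
    unfolding pauli_pairing_def sum_product by (simp only: ac_simps)
  also have "\<dots> = (\<Sum>i<?N. \<Sum>k<?N. \<Sum>j<?N. \<Sum>l<?N. \<Sum>P\<in>pauli_words n. (\<alpha> i j * \<beta> k l) * (tensor_list P $$ (i,j) * tensor_list P $$ (k,l)))"
    by (rule sum_swap_outer4)
  also have "\<dots> = (\<Sum>i<?N. \<Sum>k<?N. \<Sum>j<?N. \<Sum>l<?N. (\<alpha> i j * \<beta> k l) * (if i = l \<and> j = k then of_nat ?N else 0))"
    by (intro sum.cong refl) (simp add: sum_distrib_left[symmetric] pauli_words_completeness)
  also have "\<dots> = (\<Sum>i<?N. \<Sum>k<?N. of_nat ?N * (\<alpha> i k * \<beta> k i))"
  proof (intro sum.cong refl)
    fix i k assume "i \<in> {..<?N}" "k \<in> {..<?N}"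
    then have ik: "i < ?N" "k < ?N" by auto
    have "(\<Sum>j<?N. \<Sum>l<?N. (\<alpha> i j * \<beta> k l) * (if i = l \<and> j = k then of_nat ?N else 0))
        = (\<Sum>j<?N. \<Sum>l<?N. if i = l \<and> j = k then of_nat ?N * (\<alpha> i j * \<beta> k l) else 0)"
      by (intro sum.cong refl) auto
    also have "\<dots> = of_nat ?N * (\<alpha> i k * \<beta> k i)"
      by (rule sum_sum_delta[OF ik, where g = "\<lambda>j l. of_nat ?N * (\<alpha> i j * \<beta> k l)"])
    finally show "(\<Sum>j<?N. \<Sum>l<?N. (\<alpha> i j * \<beta> k l) * (if i = l \<and> j = k then of_nat ?N else 0))
        = of_nat ?N * (\<alpha> i k * \<beta> k i)" .
  qed
  also have "\<dots> = 2^n * (\<Sum>i<2^n. \<Sum>j<2^n. \<alpha> i j * \<beta> j i)"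
    by (simp add: sum_distrib_left)
  finally show ?thesis .
qed

(* tr (rho T_P): 2^n times the coefficient of T_P in the Pauli expansion of rho *)
definition pauli_coord :: "nat \<Rightarrow> complex mat \<Rightarrow> complex mat list \<Rightarrow> complex" where
  "pauli_coord n \<rho> P = pauli_pairing n (\<lambda>c d. \<rho> $$ (d,c)) P"

definition conj_kernel :: "nat \<Rightarrow> nat \<Rightarrow> complex mat \<Rightarrow> complex mat list \<Rightarrow> nat \<Rightarrow> nat \<Rightarrow> complex" where
  "conj_kernel n x U W c d = (\<Sum>i<2^n. \<Sum>j<2^n. U $$ (x,i) * cnj (U $$ (x,j)) * tensor_list W $$ (i,c) * tensor_list W $$ (d,j))"

lemma conj_diag_smult: assumes "U \<in> carrier_mat N N" "M \<in> carrier_mat N N" "x < N"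
  shows "conj_diag x U (c \<cdot>\<^sub>m M) = c * conj_diag x U M"
  using assms by (simp add: conj_diag_expand[of _ N] sum_distrib_left ac_simps)

lemma conj_diag_pauli_sandwich:
  assumes U: "U \<in> carrier_mat (2^n) (2^n)" and M: "M \<in> carrier_mat (2^n) (2^n)"
  and W: "W \<in> pauli_words n" and x: "x < 2^n"
  shows "conj_diag x U (tensor_list W * M * tensor_list W) = (\<Sum>c<2^n. \<Sum>d<2^n. conj_kernel n x U W c d * M $$ (c,d))"
proof -
  let ?N = "2^n::nat"
  have cW: "tensor_list W \<in> carrier_mat ?N ?N" using tensor_list_pauli_carrier[OF W] .
  have cP: "tensor_list W * M * tensor_list W \<in> carrier_mat ?N ?N" using cW M by simp
  have "conj_diag x U (tensor_list W * M * tensor_list W)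
     = (\<Sum>i<?N. \<Sum>j<?N. U $$ (x,i) * (tensor_list W * M * tensor_list W) $$ (i,j) * cnj (U $$ (x,j)))"
    by (rule conj_diag_expand[OF U cP x])
  also have "\<dots> = (\<Sum>i<?N. \<Sum>j<?N. U $$ (x,i) * (\<Sum>c<?N. \<Sum>d<?N. tensor_list W $$ (i,c) * M $$ (c,d) * tensor_list W $$ (d,j)) * cnj (U $$ (x,j)))"
    by (intro sum.cong refl) (simp del: assoc_mult_mat add: index_mult3_square[OF cW M cW])
  also have "\<dots> = (\<Sum>i<?N. \<Sum>j<?N. \<Sum>c<?N. \<Sum>d<?N. (U $$ (x,i) * cnj (U $$ (x,j)) * tensor_list W $$ (i,c) * tensor_list W $$ (d,j)) * M $$ (c,d))"
    by (simp add: sum_distrib_left sum_distrib_right ac_simps)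
  also have "\<dots> = (\<Sum>c<?N. \<Sum>d<?N. \<Sum>i<?N. \<Sum>j<?N. (U $$ (x,i) * cnj (U $$ (x,j)) * tensor_list W $$ (i,c) * tensor_list W $$ (d,j)) * M $$ (c,d))"
    by (rule sum_swap_pairs)
  also have "\<dots> = (\<Sum>c<?N. \<Sum>d<?N. conj_kernel n x U W c d * M $$ (c,d))"
    unfolding conj_kernel_def by (simp add: sum_distrib_right)
  finally show ?thesis .
qed

lemma conj_diag_pauli_pairing:
  assumes U: "U \<in> carrier_mat (2^n) (2^n)" and P: "P \<in> pauli_words n" and x: "x < 2^n"
  shows "conj_diag x U (tensor_list P) = pauli_pairing n (\<lambda>i j. U $$ (x,i) * cnj (U $$ (x,j))) P"
  unfolding pauli_pairing_def using conj_diag_expand[OF U tensor_list_pauli_carrier[OF P] x]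
  by (simp add: ac_simps)

lemma comm_sign_conj_diag:
  assumes U: "U \<in> carrier_mat (2^n) (2^n)" and P: "P \<in> pauli_words n" and W: "W \<in> pauli_words n" and x: "x < 2^n"
  shows "comm_sign W P * conj_diag x U (tensor_list P) = pauli_pairing n (conj_kernel n x U W) P"
proof -
  have "comm_sign W P * conj_diag x U (tensor_list P) = conj_diag x U (comm_sign W P \<cdot>\<^sub>m tensor_list P)"
    by (rule conj_diag_smult[OF U tensor_list_pauli_carrier[OF P] x, symmetric])
  also have "\<dots> = conj_diag x U (tensor_list W * tensor_list P * tensor_list W)"
    by (simp add: tensor_list_conj[OF W P])
  also have "\<dots> = pauli_pairing n (conj_kernel n x U W) P"
    unfolding pauli_pairing_def by (rule conj_diag_pauli_sandwich[OF U tensor_list_pauli_carrier[OF P] W x])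
  finally show ?thesis .
qed

lemma pauli_expansion_conj:
  assumes U: "U \<in> carrier_mat (2^n) (2^n)" and R: "\<rho> \<in> carrier_mat (2^n) (2^n)"
  and W: "W \<in> pauli_words n" and x: "x < 2^n"
  shows "(\<Sum>P\<in>pauli_words n. pauli_coord n \<rho> P * (comm_sign W P * conj_diag x U (tensor_list P))) = 2^n * conj_diag x U (tensor_list W * \<rho> * tensor_list W)"
proof -
  have "(\<Sum>P\<in>pauli_words n. pauli_coord n \<rho> P * (comm_sign W P * conj_diag x U (tensor_list P))) = (\<Sum>P\<in>pauli_words n. pauli_pairing n (\<lambda>c d. \<rho> $$ (d,c)) P * pauli_pairing n (conj_kernel n x U W) P)"
    by (intro sum.cong refl) (simp add: pauli_coord_def comm_sign_conj_diag[OF U _ W x])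
  also have "\<dots> = 2^n * (\<Sum>c<2^n. \<Sum>d<2^n. \<rho> $$ (d,c) * conj_kernel n x U W d c)"
    by (rule sum_pauli_pairing_mult)
  also have "(\<Sum>c<2^n. \<Sum>d<2^n. \<rho> $$ (d,c) * conj_kernel n x U W d c) = (\<Sum>d<2^n. \<Sum>c<2^n. conj_kernel n x U W d c * \<rho> $$ (d,c))"
    by (subst sum.swap) (simp add: ac_simps)
  also have "\<dots> = conj_diag x U (tensor_list W * \<rho> * tensor_list W)"
    by (rule conj_diag_pauli_sandwich[OF U R W x, symmetric])
  finally show ?thesis .
qed

lemma sum_comm_sign:
  assumes "P \<in> pauli_words n"
  shows "(\<Sum>W\<in>pauli_words n. comm_sign W P) = (if P = replicate n pauliI then 4^n else 0)"
  using comm_sign_orthogonal[OF assms identity_pauli_word] by (simp add: comm_sign_identity)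

lemma pauli_twirl_sum:
  assumes U: "U \<in> carrier_mat (2^n) (2^n)" and R: "\<rho> \<in> carrier_mat (2^n) (2^n)" and x: "x < 2^n"
  shows "(\<Sum>W\<in>pauli_words n. conj_diag x U (tensor_list W * \<rho> * tensor_list W))
       = 2^n * pauli_coord n \<rho> (replicate n pauliI) * conj_diag x U (tensor_list (replicate n pauliI))"
proof -
  let ?I = "replicate n pauliI"
  have D: "(2::complex)^n \<noteq> 0" by simp
  have "(2::complex)^n * (\<Sum>W\<in>pauli_words n. conj_diag x U (tensor_list W * \<rho> * tensor_list W))
      = (\<Sum>W\<in>pauli_words n. \<Sum>P\<in>pauli_words n. pauli_coord n \<rho> P * conj_diag x U (tensor_list P) * comm_sign W P)"
    by (simp add: sum_distrib_left pauli_expansion_conj[OF U R _ x, symmetric] ac_simps)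
  also have "\<dots> = (\<Sum>P\<in>pauli_words n. pauli_coord n \<rho> P * conj_diag x U (tensor_list P) * (\<Sum>W\<in>pauli_words n. comm_sign W P))"
    by (subst sum.swap) (simp add: sum_distrib_left)
  also have "\<dots> = (\<Sum>P\<in>pauli_words n. if P = ?I then pauli_coord n \<rho> P * conj_diag x U (tensor_list P) * 4^n else 0)"
    by (intro sum.cong refl) (simp add: sum_comm_sign)
  also have "\<dots> = pauli_coord n \<rho> ?I * conj_diag x U (tensor_list ?I) * 4^n"
    by (simp add: finite_pauli_words identity_pauli_word)
  finally have "(2::complex)^n * (\<Sum>W\<in>pauli_words n. conj_diag x U (tensor_list W * \<rho> * tensor_list W)) = pauli_coord n \<rho> ?I * conj_diag x U (tensor_list ?I) * 4^n" .
  moreover have "(4::complex)^n = 2^n * 2^n" by (simp add: power_mult_distrib[symmetric])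
  ultimately show ?thesis using D by (simp add: ac_simps)
qed

lemma pauli_twirl_sum_squares:
  assumes U: "U \<in> carrier_mat (2^n) (2^n)" and R: "\<rho> \<in> carrier_mat (2^n) (2^n)" and x: "x < 2^n"
  shows "(\<Sum>W\<in>pauli_words n. (conj_diag x U (tensor_list W * \<rho> * tensor_list W))^2)
       = (\<Sum>P\<in>pauli_words n. (pauli_coord n \<rho> P)^2 * (conj_diag x U (tensor_list P))^2)"
proof -
  let ?a = "\<lambda>P. pauli_coord n \<rho> P * conj_diag x U (tensor_list P)"
  have D: "(4::complex)^n \<noteq> 0" by simp
  have 4: "(4::complex)^n = 2^n * 2^n" by (simp add: power_mult_distrib[symmetric])
  have "(4::complex)^n * (\<Sum>W\<in>pauli_words n. (conj_diag x U (tensor_list W * \<rho> * tensor_list W))^2)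
      = (\<Sum>W\<in>pauli_words n. (2^n * conj_diag x U (tensor_list W * \<rho> * tensor_list W)) * (2^n * conj_diag x U (tensor_list W * \<rho> * tensor_list W)))"
    by (simp add: sum_distrib_left 4 power2_eq_square ac_simps)
  also have "\<dots> = (\<Sum>W\<in>pauli_words n. (\<Sum>P\<in>pauli_words n. ?a P * comm_sign W P) * (\<Sum>Q\<in>pauli_words n. ?a Q * comm_sign W Q))"
    by (simp add: pauli_expansion_conj[OF U R _ x, symmetric] ac_simps)
  also have "\<dots> = (\<Sum>W\<in>pauli_words n. \<Sum>P\<in>pauli_words n. \<Sum>Q\<in>pauli_words n. ?a P * ?a Q * (comm_sign W P * comm_sign W Q))"
    by (simp add: sum_product ac_simps)
  also have "\<dots> = (\<Sum>P\<in>pauli_words n. \<Sum>Q\<in>pauli_words n. ?a P * ?a Q * (\<Sum>W\<in>pauli_words n. comm_sign W P * comm_sign W Q))"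
  proof -
    have "(\<Sum>W\<in>pauli_words n. \<Sum>P\<in>pauli_words n. \<Sum>Q\<in>pauli_words n. ?a P * ?a Q * (comm_sign W P * comm_sign W Q))
        = (\<Sum>P\<in>pauli_words n. \<Sum>W\<in>pauli_words n. \<Sum>Q\<in>pauli_words n. ?a P * ?a Q * (comm_sign W P * comm_sign W Q))"
      by (rule sum.swap)
    also have "\<dots> = (\<Sum>P\<in>pauli_words n. \<Sum>Q\<in>pauli_words n. \<Sum>W\<in>pauli_words n. ?a P * ?a Q * (comm_sign W P * comm_sign W Q))"
      by (rule sum.cong[OF refl], rule sum.swap)
    finally show ?thesis by (simp add: sum_distrib_left)
  qed
  also have "\<dots> = (\<Sum>P\<in>pauli_words n. \<Sum>Q\<in>pauli_words n. if P = Q then ?a P * ?a Q * 4^n else 0)"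
    by (intro sum.cong refl) (simp add: comm_sign_orthogonal)
  also have "\<dots> = (\<Sum>P\<in>pauli_words n. ?a P * ?a P * 4^n)"
    by (intro sum.cong refl) (simp add: finite_pauli_words)
  also have "\<dots> = 4^n * (\<Sum>P\<in>pauli_words n. (pauli_coord n \<rho> P)^2 * (conj_diag x U (tensor_list P))^2)"
    by (simp add: sum_distrib_left power2_eq_square ac_simps)
  finally show ?thesis using D by simp
qed

lemma sum_conj_diag_pauli_squares: assumes U: "U \<in> carrier_mat (2^n) (2^n)" and x: "x < 2^n"
  shows "(\<Sum>P\<in>pauli_words n. (conj_diag x U (tensor_list P))^2) = 2^n * ((U * dagger U) $$ (x,x))^2"
proof -
  let ?\<alpha> = "\<lambda>i j. U $$ (x,i) * cnj (U $$ (x,j))"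
  have "(\<Sum>P\<in>pauli_words n. (conj_diag x U (tensor_list P))^2) = (\<Sum>P\<in>pauli_words n. pauli_pairing n ?\<alpha> P * pauli_pairing n ?\<alpha> P)"
    by (intro sum.cong refl) (simp add: conj_diag_pauli_pairing[OF U _ x] power2_eq_square)
  also have "\<dots> = 2^n * (\<Sum>i<2^n. \<Sum>j<2^n. ?\<alpha> i j * ?\<alpha> j i)" by (rule sum_pauli_pairing_mult)
  also have "(\<Sum>i<2^n. \<Sum>j<2^n. ?\<alpha> i j * ?\<alpha> j i) = ((U * dagger U) $$ (x,x))^2"
  proof -
    have "(U * dagger U) $$ (x,x) = (\<Sum>i<2^n. U $$ (x,i) * cnj (U $$ (x,i)))"
      using U x by (simp del: index_mult_mat add: index_mult_square[OF U dagger_carrier[OF U]])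
    then show ?thesis by (simp add: power2_eq_square sum_sum_cross_eq_mult[symmetric])
  qed
  finally show ?thesis .
qed

lemma sum_pauli_coord_squares:
  "(\<Sum>P\<in>pauli_words n. (pauli_coord n \<rho> P)^2) = 2^n * (\<Sum>c<2^n. \<Sum>d<2^n. \<rho> $$ (d,c) * \<rho> $$ (c,d))"
  unfolding pauli_coord_def power2_eq_square by (rule sum_pauli_pairing_mult)

lemma pauli_coord_identity: "pauli_coord n \<rho> (replicate n pauliI) = (\<Sum>c<2^n. \<rho> $$ (c,c))"
proof -
  have "pauli_coord n \<rho> (replicate n pauliI) = (\<Sum>c<2^n. \<Sum>d<2^n. if c = d then \<rho> $$ (d,c) else 0)"
    unfolding pauli_coord_def pauli_pairing_def tensor_list_identity by (intro sum.cong refl) auto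
  also have "\<dots> = (\<Sum>c<2^n. \<rho> $$ (c,c))" by simp
  finally show ?thesis .
qed

lemma conj_diag_identity:
  assumes "U \<in> carrier_mat (2^n) (2^n)" "U * dagger U = 1\<^sub>m (2^n)" "x < 2^n"
  shows "conj_diag x U (tensor_list (replicate n pauliI)) = 1"
  using assms unfolding conj_diag_def tensor_list_identity by simp

lemma pauli_twirl_entry: assumes M: "M \<in> carrier_mat (2^n) (2^n)" and ij: "i < 2^n" "j < 2^n"
  shows "(\<Sum>W\<in>pauli_words n. (tensor_list W * M * tensor_list W) $$ (i,j)) = (if i = j then 2^n * (\<Sum>c<2^n. M $$ (c,c)) else 0)"
proof -
  let ?N = "2^n::nat"
  have "(\<Sum>W\<in>pauli_words n. (tensor_list W * M * tensor_list W) $$ (i,j))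
      = (\<Sum>W\<in>pauli_words n. \<Sum>c<?N. \<Sum>d<?N. M $$ (c,d) * (tensor_list W $$ (i,c) * tensor_list W $$ (d,j)))"
    by (intro sum.cong refl) (simp del: assoc_mult_mat add: index_mult3_square[OF tensor_list_pauli_carrier M tensor_list_pauli_carrier ij] ac_simps)
  also have "\<dots> = (\<Sum>c<?N. \<Sum>d<?N. \<Sum>W\<in>pauli_words n. M $$ (c,d) * (tensor_list W $$ (i,c) * tensor_list W $$ (d,j)))"
  proof -
    have "(\<Sum>W\<in>pauli_words n. \<Sum>c<?N. \<Sum>d<?N. M $$ (c,d) * (tensor_list W $$ (i,c) * tensor_list W $$ (d,j)))
        = (\<Sum>c<?N. \<Sum>W\<in>pauli_words n. \<Sum>d<?N. M $$ (c,d) * (tensor_list W $$ (i,c) * tensor_list W $$ (d,j)))"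
      by (rule sum.swap)
    also have "\<dots> = (\<Sum>c<?N. \<Sum>d<?N. \<Sum>W\<in>pauli_words n. M $$ (c,d) * (tensor_list W $$ (i,c) * tensor_list W $$ (d,j)))"
      by (rule sum.cong[OF refl], rule sum.swap)
    finally show ?thesis .
  qed
  also have "\<dots> = (\<Sum>c<?N. \<Sum>d<?N. M $$ (c,d) * (if i = j \<and> c = d then 2^n else 0))"
    using ij by (intro sum.cong refl) (simp add: sum_distrib_left[symmetric] pauli_words_completeness)
  also have "\<dots> = (\<Sum>c<?N. if i = j then M $$ (c,c) * 2^n else 0)"
  proof (intro sum.cong refl)
    fix c assume "c \<in> {..<?N}"
    then show "(\<Sum>d<?N. M $$ (c,d) * (if i = j \<and> c = d then 2^n else 0)) = (if i = j then M $$ (c,c) * 2^n else 0)"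
      by (cases "i = j") (auto simp: if_distrib cong: if_cong)
  qed
  also have "\<dots> = (if i = j then 2^n * (\<Sum>c<2^n. M $$ (c,c)) else 0)"
    by (simp add: sum_distrib_left ac_simps)
  finally show ?thesis .
qed

section \<open>The Clifford group modulo phase\<close>

lemma phase_relE:
  "(U,V) \<in> phase_rel n \<Longrightarrow> U \<in> clifford n \<and> V \<in> clifford n \<and> (\<exists>c. cmod c = 1 \<and> V = c \<cdot>\<^sub>m U)"
  unfolding phase_rel_def by auto

lemma phase_relI:
  "U \<in> clifford n \<Longrightarrow> cmod c = 1 \<Longrightarrow> (U, c \<cdot>\<^sub>m U) \<in> phase_rel n"
  unfolding phase_rel_def using clifford_smult_phase by auto

lemma equiv_phase_rel: "equiv (clifford n) (phase_rel n)"
proof (rule equivI)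
  show "phase_rel n \<subseteq> clifford n \<times> clifford n" unfolding phase_rel_def by auto
  show "refl_on (clifford n) (phase_rel n)"
  proof (rule refl_onI)
    fix U assume "U \<in> clifford n"
    then show "(U, U) \<in> phase_rel n" using phase_relI[of U n 1] by (simp add: one_smult_mat)
  qed
  show "sym (phase_rel n)"
  proof (rule symI)
    fix U V assume "(U, V) \<in> phase_rel n"
    then obtain c where c: "U \<in> clifford n" "V \<in> clifford n" "cmod c = 1" "V = c \<cdot>\<^sub>m U" using phase_relE by blast
    then have "U = cnj c \<cdot>\<^sub>m V" using cnj_mult_self_unit[OF c(3)] by (simp add: smult_smult_mat one_smult_mat)
    then show "(V, U) \<in> phase_rel n" using phase_relI[OF c(2), of "cnj c"] c by simp
  qed
  show "trans (phase_rel n)"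
  proof (rule transI)
    fix U V W assume "(U, V) \<in> phase_rel n" "(V, W) \<in> phase_rel n"
    then obtain c d where c: "U \<in> clifford n" "cmod c = 1" "V = c \<cdot>\<^sub>m U" "cmod d = 1" "W = d \<cdot>\<^sub>m V"
      using phase_relE by blast
    then have "W = (d * c) \<cdot>\<^sub>m U" by (simp add: smult_smult_mat)
    moreover have "cmod (d * c) = 1" using c by (simp add: norm_mult)
    ultimately show "(U, W) \<in> phase_rel n" using phase_relI[OF c(1)] by simp
  qed
qed

definition class_rep :: "complex mat set \<Rightarrow> complex mat" where "class_rep C = (SOME U. U \<in> C)"

lemma class_rep_props: assumes "C \<in> clifford_mod_phase n"
  shows "class_rep C \<in> C" "class_rep C \<in> clifford n" "C = phase_rel n `` {class_rep C}"
proof -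
  from assms obtain U where U: "C = phase_rel n `` {U}" "U \<in> clifford n"
    unfolding clifford_mod_phase_def by (blast elim: quotientE)
  have "U \<in> C" using U equiv_class_self[OF equiv_phase_rel] by simp
  then show r: "class_rep C \<in> C" unfolding class_rep_def by (rule someI)
  then have "(U, class_rep C) \<in> phase_rel n" using U by simp
  then show "class_rep C \<in> clifford n" using phase_relE by blast
  show "C = phase_rel n `` {class_rep C}" using U equiv_class_eq[OF equiv_phase_rel \<open>(U, class_rep C) \<in> phase_rel n\<close>] by simp
qed

lemma mem_phase_class: assumes "C \<in> clifford_mod_phase n" "V \<in> C"
  shows "\<exists>c. cmod c = 1 \<and> V = c \<cdot>\<^sub>m class_rep C"
proof -
  have "(class_rep C, V) \<in> phase_rel n" using assms class_rep_props(3)[OF assms(1)] by blast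
  then show ?thesis using phase_relE by blast
qed

lemma conj_diag_phase:
  assumes "U \<in> carrier_mat N N" "M \<in> carrier_mat N N" "cmod c = 1" "x < N"
  shows "conj_diag x (c \<cdot>\<^sub>m U) M = conj_diag x U M"
proof -
  have "(c \<cdot>\<^sub>m U) * M * dagger (c \<cdot>\<^sub>m U) = (c * cnj c) \<cdot>\<^sub>m (U * M * dagger U)"
    using assms carrier_dims[OF assms(1)] carrier_dims[OF assms(2)] by (simp add: dagger_smult smult_mult_simps mult.commute)
  then show ?thesis unfolding conj_diag_def using assms cnj_mult_self_unit[OF assms(3)] by (simp add: mult.commute)
qed

lemma conj_diag_mult:
  assumes "U \<in> carrier_mat N N" "W \<in> carrier_mat N N" "M \<in> carrier_mat N N"
  shows "conj_diag x (U * W) M = conj_diag x U (W * M * dagger W)"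
proof -
  have "U * W * M * dagger (U * W) = U * (W * M * dagger W) * dagger U"
    using assms carrier_dims[OF assms(1)] carrier_dims[OF assms(2)] carrier_dims[OF assms(3)]
    by (simp add: dagger_mult[OF assms(1) assms(2)] assoc_mult_dims)
  then show ?thesis unfolding conj_diag_def by simp
qed

definition right_translate :: "nat \<Rightarrow> complex mat \<Rightarrow> complex mat set \<Rightarrow> complex mat set" where
  "right_translate n W C = phase_rel n `` {class_rep C * W}"

lemma right_translate_in:
  "W \<in> clifford n \<Longrightarrow> C \<in> clifford_mod_phase n \<Longrightarrow> right_translate n W C \<in> clifford_mod_phase n"
  unfolding right_translate_def clifford_mod_phase_def
  by (rule quotientI, rule clifford_mult[OF class_rep_props(2)]) (auto simp: clifford_mod_phase_def)

lemma class_rep_right_translate: assumes "W \<in> clifford n" "C \<in> clifford_mod_phase n"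
  shows "\<exists>c. cmod c = 1 \<and> class_rep (right_translate n W C) = c \<cdot>\<^sub>m (class_rep C * W)"
proof -
  have "class_rep (right_translate n W C) \<in> right_translate n W C" using class_rep_props(1)[OF right_translate_in[OF assms]] .
  then have "(class_rep C * W, class_rep (right_translate n W C)) \<in> phase_rel n" unfolding right_translate_def by simp
  then show ?thesis using phase_relE by blast
qed

lemma right_translate_involution:
  assumes W: "W \<in> clifford n" "W * W = 1\<^sub>m (2^n)" and C: "C \<in> clifford_mod_phase n"
  shows "right_translate n W (right_translate n W C) = C"
proof -
  obtain c where c: "cmod c = 1" "class_rep (right_translate n W C) = c \<cdot>\<^sub>m (class_rep C * W)" using class_rep_right_translate[OF W(1) C] by blast
  have R: "class_rep C \<in> clifford n" using class_rep_props(2)[OF C] .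
  note cR = cliffordD(1)[OF R] and cW = cliffordD(1)[OF W(1)]
  have "class_rep (right_translate n W C) * W = c \<cdot>\<^sub>m class_rep C"
    using c(2) W(2) carrier_dims[OF cR] carrier_dims[OF cW] by (simp add: smult_mult_simps)
  then have "right_translate n W (right_translate n W C) = phase_rel n `` {c \<cdot>\<^sub>m class_rep C}" unfolding right_translate_def by simp
  also have "\<dots> = phase_rel n `` {class_rep C}"
    using equiv_class_eq[OF equiv_phase_rel phase_relI[OF R c(1)]] by simp
  also have "\<dots> = C" using class_rep_props(3)[OF C] by simp
  finally show ?thesis .
qed

lemma sum_right_translate:
  assumes W: "W \<in> clifford n" "W * W = 1\<^sub>m (2^n)" and M: "M \<in> carrier_mat (2^n) (2^n)" and x: "x < 2^n"
  shows "(\<Sum>C\<in>clifford_mod_phase n. g (conj_diag x (class_rep C) M)) = (\<Sum>C\<in>clifford_mod_phase n. g (conj_diag x (class_rep C * W) M))"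
proof -
  let ?cl = "clifford_mod_phase n"
  have "(\<Sum>C\<in>?cl. g (conj_diag x (class_rep (right_translate n W C)) M)) = (\<Sum>C\<in>?cl. g (conj_diag x (class_rep C) M))"
    by (rule sum.reindex_bij_witness[where i = "right_translate n W" and j = "right_translate n W"])
       (auto simp: right_translate_involution[OF W] right_translate_in[OF W(1)])
  moreover have "conj_diag x (class_rep (right_translate n W C)) M = conj_diag x (class_rep C * W) M" if C: "C \<in> ?cl" for C
  proof -
    obtain c where c: "cmod c = 1" "class_rep (right_translate n W C) = c \<cdot>\<^sub>m (class_rep C * W)" using class_rep_right_translate[OF W(1) C] by blast
    have "class_rep C * W \<in> carrier_mat (2^n) (2^n)" using cliffordD(1)[OF clifford_mult[OF class_rep_props(2)[OF C] W(1)]] .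
    then show ?thesis using conj_diag_phase[OF _ M c(1) x] c(2) by simp
  qed
  ultimately show ?thesis by simp
qed

lemma pauli_invariant_scalar:
  assumes M: "M \<in> carrier_mat (2^n) (2^n)"
    and inv: "\<And>W. W \<in> pauli_words n \<Longrightarrow> tensor_list W * M * tensor_list W = M"
  shows "M = ((\<Sum>c<2^n. M $$ (c,c)) / 2^n) \<cdot>\<^sub>m 1\<^sub>m (2^n)"
proof (rule eq_matI)
  fix i j assume "i < dim_row (((\<Sum>c<2^n. M $$ (c,c)) / 2^n) \<cdot>\<^sub>m 1\<^sub>m (2^n))"
    "j < dim_col (((\<Sum>c<2^n. M $$ (c,c)) / 2^n) \<cdot>\<^sub>m (1\<^sub>m (2^n) :: complex mat))"
  then have ij: "i < 2^n" "j < 2^n" by auto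
  have "4^n * M $$ (i,j) = (\<Sum>W\<in>pauli_words n. (tensor_list W * M * tensor_list W) $$ (i,j))"
    by (simp add: inv card_pauli_words)
  also have "\<dots> = (if i = j then 2^n * (\<Sum>c<2^n. M $$ (c,c)) else 0)"
    by (rule pauli_twirl_entry[OF M ij])
  finally have "4^n * M $$ (i,j) = (if i = j then 2^n * (\<Sum>c<2^n. M $$ (c,c)) else 0)" .
  moreover have "(4::complex)^n = 2^n * 2^n" by (simp flip: power_mult_distrib)
  ultimately show "M $$ (i,j) = (((\<Sum>c<2^n. M $$ (c,c)) / 2^n) \<cdot>\<^sub>m 1\<^sub>m (2^n)) $$ (i,j)"
    using ij by (auto simp: field_simps split: if_splits)
qed (use M in auto)

lemma clifford_same_action_phase:
  assumes U: "U \<in> clifford n" and V: "V \<in> clifford n"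
    and same: "\<And>ws. ws \<in> pauli_words n \<Longrightarrow> U * tensor_list ws * dagger U = V * tensor_list ws * dagger V"
  shows "\<exists>c. cmod c = 1 \<and> V = c \<cdot>\<^sub>m U"
proof -
  note Uc = cliffordD[OF U] and Vc = cliffordD[OF V]
  note dU = carrier_dims[OF Uc(1)] and dV = carrier_dims[OF Vc(1)]
  define M where "M = dagger V * U"
  have cM: "M \<in> carrier_mat (2^n) (2^n)"
    unfolding M_def by (rule mult_carrier_mat[OF dagger_carrier[OF Vc(1)] Uc(1)])
  note dM = carrier_dims[OF cM]
  have "tensor_list W * M * tensor_list W = M" if W: "W \<in> pauli_words n" for W
  proof -
    let ?T = "tensor_list W"
    have dT: "dim_row ?T = 2^n" "dim_col ?T = 2^n" using W pauli_words_length by auto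
    have "dagger V * (U * ?T * dagger U) * U = dagger V * (V * ?T * dagger V) * U"
      using same[OF W] by simp
    then have "dagger V * (U * ?T) = ?T * M"
      using dU dV dT Uc(2) Vc(2) mult_cancel_left_inverse[OF Vc(2)] by (simp add: M_def assoc_mult_dims)
    then have "?T * (?T * M) = ?T * M * ?T"
      unfolding M_def using dU dV dT by (simp add: assoc_mult_dims)
    then show ?thesis
      using tensor_list_square[OF W] cM dM dT by (simp add: assoc_mult_dims[symmetric])
  qed
  then obtain d where Md: "M = d \<cdot>\<^sub>m 1\<^sub>m (2^n)" using pauli_invariant_scalar[OF cM] by blast
  have "V * M = U"
    unfolding M_def using dU dV Vc(3) by (simp add: assoc_mult_dims[symmetric])
  then have Ud: "U = d \<cdot>\<^sub>m V" unfolding Md using dV by (simp add: smult_mult_right)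
  have "dagger U * U = (cnj d * d) \<cdot>\<^sub>m (dagger V * V)"
    unfolding Ud using dV by (simp add: dagger_smult smult_mult_simps mult.commute)
  then have "1\<^sub>m (2^n) = (cnj d * d) \<cdot>\<^sub>m (1\<^sub>m (2^n) :: complex mat)" using Uc(2) Vc(2) by simp
  then have "(1\<^sub>m (2^n) :: complex mat) $$ (0,0) = ((cnj d * d) \<cdot>\<^sub>m 1\<^sub>m (2^n)) $$ (0,0)" by (rule arg_cong)
  then have dd: "cnj d * d = 1" by simp
  have "cmod d = 1"
  proof -
    have "complex_of_real ((cmod d)^2) = 1" using complex_norm_square[of d] dd by (simp add: mult.commute)
    then have "(cmod d)^2 = 1" by (metis of_real_eq_1_iff)
    then show ?thesis using norm_ge_zero[of d] unfolding power2_eq_1_iff by linarith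
  qed
  moreover have "V = cnj d \<cdot>\<^sub>m U" unfolding Ud using dd by (simp add: smult_smult_mat one_smult_mat)
  ultimately show ?thesis by (intro exI[of _ "cnj d"]) simp
qed

lemma finite_clifford_mod_phase: "finite (clifford_mod_phase n)"
proof -
  let ?cl = "clifford_mod_phase n" and ?pg = "pauli_group n"
  let ?f = "\<lambda>C. (\<lambda>P. (P, class_rep C * P * dagger (class_rep C))) ` ?pg"
  have "inj_on ?f ?cl"
  proof (rule inj_onI)
    fix C D assume C: "C \<in> ?cl" and D: "D \<in> ?cl" and e: "?f C = ?f D"
    have "class_rep C * tensor_list ws * dagger (class_rep C) = class_rep D * tensor_list ws * dagger (class_rep D)" if "ws \<in> pauli_words n" for ws
    proof -
      have "(tensor_list ws, class_rep C * tensor_list ws * dagger (class_rep C)) \<in> ?f D"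
        using e tensor_list_in_pauli_group[OF that] by blast
      then show ?thesis by auto
    qed
    then obtain c where "cmod c = 1" "class_rep D = c \<cdot>\<^sub>m class_rep C"
      using clifford_same_action_phase[OF class_rep_props(2)[OF C] class_rep_props(2)[OF D]] by blast
    then have "(class_rep C, class_rep D) \<in> phase_rel n" using phase_relI[OF class_rep_props(2)[OF C]] by simp
    then show "C = D" using class_rep_props(3)[OF C] class_rep_props(3)[OF D] equiv_class_eq[OF equiv_phase_rel] by metis
  qed
  moreover have "?f ` ?cl \<subseteq> Pow (?pg \<times> ?pg)"
    using cliffordD(4)[OF class_rep_props(2)] by auto
  moreover have "finite (Pow (?pg \<times> ?pg))" using finite_pauli_group by simp
  ultimately show ?thesis by (rule inj_on_finite)
qed

lemma clifford_mod_phase_nonempty: "clifford_mod_phase n \<noteq> {}"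
proof -
  have "1\<^sub>m (2^n) \<in> clifford n"
    using tensor_list_clifford[OF identity_pauli_word[of n]] by (simp add: tensor_list_identity)
  then show ?thesis unfolding clifford_mod_phase_def by (auto dest: quotientI)
qed

section \<open>Moments of the outcome probability\<close>

context
  fixes n x :: nat and \<rho> :: "complex mat"
  assumes x: "x < 2^n" and R: "\<rho> \<in> carrier_mat (2^n) (2^n)"
begin

definition pauli_weight :: "complex mat list \<Rightarrow> complex" where
  "pauli_weight P = (\<Sum>C\<in>clifford_mod_phase n. (conj_diag x (class_rep C) (tensor_list P))^2)"

lemma class_rep_unitary:
  "C \<in> clifford_mod_phase n \<Longrightarrow> class_rep C \<in> carrier_mat (2^n) (2^n) \<and> class_rep C * dagger (class_rep C) = 1\<^sub>m (2^n)"
  using cliffordD(1,3)[OF class_rep_props(2)] by blast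

lemma sum_pauli_translate:
  assumes W: "W \<in> pauli_words n" and M: "M \<in> carrier_mat (2^n) (2^n)"
  shows "(\<Sum>C\<in>clifford_mod_phase n. g (conj_diag x (class_rep C) M)) = (\<Sum>C\<in>clifford_mod_phase n. g (conj_diag x (class_rep C) (tensor_list W * M * tensor_list W)))"
proof -
  have "(\<Sum>C\<in>clifford_mod_phase n. g (conj_diag x (class_rep C) M)) = (\<Sum>C\<in>clifford_mod_phase n. g (conj_diag x (class_rep C * tensor_list W) M))"
    by (rule sum_right_translate[OF tensor_list_clifford[OF W] tensor_list_square[OF W] M x])
  also have "\<dots> = (\<Sum>C\<in>clifford_mod_phase n. g (conj_diag x (class_rep C) (tensor_list W * M * tensor_list W)))"
    by (intro sum.cong refl) (simp add: conj_diag_mult[OF class_rep_unitary[THEN conjunct1] tensor_list_pauli_carrier[OF W] M] tensor_list_hermitian[OF W])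
  finally show ?thesis .
qed

lemma first_moment:
  "(\<Sum>C\<in>clifford_mod_phase n. conj_diag x (class_rep C) \<rho>) = of_nat (card (clifford_mod_phase n)) * pauli_coord n \<rho> (replicate n pauliI) / 2^n"
proof -
  let ?S = "\<Sum>C\<in>clifford_mod_phase n. conj_diag x (class_rep C) \<rho>"
  have "(4::complex)^n * ?S = (\<Sum>W\<in>pauli_words n. ?S)" by (simp add: card_pauli_words)
  also have "\<dots> = (\<Sum>W\<in>pauli_words n. \<Sum>C\<in>clifford_mod_phase n. conj_diag x (class_rep C) (tensor_list W * \<rho> * tensor_list W))"
    by (rule sum.cong[OF refl], rule sum_pauli_translate[OF _ R])
  also have "\<dots> = (\<Sum>C\<in>clifford_mod_phase n. \<Sum>W\<in>pauli_words n. conj_diag x (class_rep C) (tensor_list W * \<rho> * tensor_list W))"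
    by (rule sum.swap)
  also have "\<dots> = (\<Sum>C\<in>clifford_mod_phase n. 2^n * pauli_coord n \<rho> (replicate n pauliI))"
    by (intro sum.cong refl) (simp add: pauli_twirl_sum[OF class_rep_unitary[THEN conjunct1] R x] conj_diag_identity[OF _ _ x] class_rep_unitary)
  also have "\<dots> = of_nat (card (clifford_mod_phase n)) * 2^n * pauli_coord n \<rho> (replicate n pauliI)" by simp
  finally have "(4::complex)^n * ?S = of_nat (card (clifford_mod_phase n)) * 2^n * pauli_coord n \<rho> (replicate n pauliI)" .
  moreover have "(4::complex)^n = 2^n * 2^n" by (simp add: power_mult_distrib[symmetric])
  ultimately show ?thesis by (simp add: field_simps)
qed

lemma second_moment_expand:
  "4^n * (\<Sum>C\<in>clifford_mod_phase n. (conj_diag x (class_rep C) \<rho>)^2) = (\<Sum>P\<in>pauli_words n. (pauli_coord n \<rho> P)^2 * pauli_weight P)"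
proof -
  let ?S = "\<Sum>C\<in>clifford_mod_phase n. (conj_diag x (class_rep C) \<rho>)^2"
  have "(4::complex)^n * ?S = (\<Sum>W\<in>pauli_words n. ?S)" by (simp add: card_pauli_words)
  also have "\<dots> = (\<Sum>W\<in>pauli_words n. \<Sum>C\<in>clifford_mod_phase n. (conj_diag x (class_rep C) (tensor_list W * \<rho> * tensor_list W))^2)"
    by (rule sum.cong[OF refl], rule sum_pauli_translate[OF _ R])
  also have "\<dots> = (\<Sum>C\<in>clifford_mod_phase n. \<Sum>W\<in>pauli_words n. (conj_diag x (class_rep C) (tensor_list W * \<rho> * tensor_list W))^2)"
    by (rule sum.swap)
  also have "\<dots> = (\<Sum>C\<in>clifford_mod_phase n. \<Sum>P\<in>pauli_words n. (pauli_coord n \<rho> P)^2 * (conj_diag x (class_rep C) (tensor_list P))^2)"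
    by (rule sum.cong[OF refl], rule pauli_twirl_sum_squares[OF class_rep_unitary[THEN conjunct1] R x])
  also have "\<dots> = (\<Sum>P\<in>pauli_words n. (pauli_coord n \<rho> P)^2 * pauli_weight P)"
    unfolding pauli_weight_def by (subst sum.swap) (simp add: sum_distrib_left)
  finally show ?thesis .
qed

lemma pauli_weight_identity: "pauli_weight (replicate n pauliI) = of_nat (card (clifford_mod_phase n))"
  unfolding pauli_weight_def by (simp add: conj_diag_identity[OF _ _ x] class_rep_unitary)

lemma sum_pauli_weight:
  "(\<Sum>P\<in>pauli_words n. pauli_weight P) = of_nat (card (clifford_mod_phase n)) * 2^n"
proof -
  have "(\<Sum>P\<in>pauli_words n. pauli_weight P) = (\<Sum>C\<in>clifford_mod_phase n. \<Sum>P\<in>pauli_words n. (conj_diag x (class_rep C) (tensor_list P))^2)"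
    unfolding pauli_weight_def by (rule sum.swap)
  also have "\<dots> = (\<Sum>C\<in>clifford_mod_phase n. 2^n)"
    by (intro sum.cong refl) (simp add: sum_conj_diag_pauli_squares[OF _ x] class_rep_unitary x)
  finally show ?thesis by simp
qed

lemma pauli_weight_anticommuting:
  assumes a: "a \<in> pauli_words n" and b: "b \<in> pauli_words n" and ab: "comm_sign a b = -1"
  shows "pauli_weight a = pauli_weight b"
proof -
  let ?V = "pauli_rotation a b"
  have "pauli_weight a = (\<Sum>C\<in>clifford_mod_phase n. (conj_diag x (class_rep C * ?V) (tensor_list a))^2)"
    unfolding pauli_weight_def by (rule sum_right_translate[OF pauli_rotation_clifford[OF a b ab] pauli_rotation_square[OF a b ab] tensor_list_pauli_carrier[OF a] x])
  also have "\<dots> = pauli_weight b"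
    unfolding pauli_weight_def
    by (intro sum.cong refl)
       (simp add: conj_diag_mult[OF class_rep_unitary[THEN conjunct1] pauli_rotation_carrier[OF a b ab] tensor_list_pauli_carrier[OF a]] pauli_rotation_hermitian[OF a b ab] pauli_rotation_conj[OF a b ab])
  finally show ?thesis .
qed

lemma pauli_weight_const:
  assumes "a \<in> pauli_words n" "a \<noteq> replicate n pauliI" "b \<in> pauli_words n" "b \<noteq> replicate n pauliI"
  shows "pauli_weight a = pauli_weight b"
proof -
  obtain r where r: "r \<in> pauli_words n" "comm_sign r a = -1" "comm_sign r b = -1" using exists_common_anticommuting_word[OF assms] by blast
  show ?thesis using pauli_weight_anticommuting[OF r(1) assms(1) r(2)] pauli_weight_anticommuting[OF r(1) assms(3) r(3)] by simp
qed

lemma pauli_weight_non_identity: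
  assumes P: "P \<in> pauli_words n" "P \<noteq> replicate n pauliI"
  shows "pauli_weight P = of_nat (card (clifford_mod_phase n)) / (2^n + 1)"
proof -
  let ?m = "of_nat (card (clifford_mod_phase n)) :: complex"
  let ?R = "pauli_words n - {replicate n pauliI}"
  have I: "replicate n pauliI \<in> pauli_words n" by (rule identity_pauli_word)
  have "?m + (\<Sum>Q\<in>?R. pauli_weight Q) = ?m * 2^n"
    using sum.remove[OF finite_pauli_words I, of pauli_weight] sum_pauli_weight pauli_weight_identity
    by simp
  moreover have "(\<Sum>Q\<in>?R. pauli_weight Q) = of_nat (card ?R) * pauli_weight P"
  proof -
    have "pauli_weight Q = pauli_weight P" if "Q \<in> ?R" for Q
      using that pauli_weight_const[of Q P] P by blast
    then show ?thesis by simp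
  qed
  moreover have "(of_nat (card ?R) :: complex) = (2^n - 1) * (2^n + 1)"
  proof -
    have "card ?R = 4^n - 1"
      using I finite_pauli_words by (simp add: card_Diff_singleton card_pauli_words)
    moreover have "(4::complex)^n = 2^n * 2^n" by (simp flip: power_mult_distrib)
    ultimately show ?thesis by (simp add: of_nat_diff algebra_simps)
  qed
  ultimately have prod: "((2::complex)^n - 1) * ((2^n + 1) * pauli_weight P - ?m) = 0"
    by (simp add: algebra_simps)
  have "(2::complex)^n - 1 \<noteq> 0"
  proof -
    have "n \<noteq> 0" using P by (auto simp: pauli_words_def)
    then have "(2::nat)^n \<noteq> 1" by (simp add: power_eq_1_iff)
    then have "(2::complex)^n \<noteq> 1" by (metis of_nat_eq_1_iff of_nat_numeral of_nat_power)
    then show ?thesis by simp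
  qed
  with prod have "(2^n + 1) * pauli_weight P = ?m" by simp
  moreover have "(2::complex)^n + 1 \<noteq> 0"
  proof -
    have "(2::complex)^n + 1 = of_nat (2^n + 1)" by simp
    also have "\<dots> \<noteq> 0" by (simp only: of_nat_eq_0_iff)
    finally show ?thesis .
  qed
  ultimately show ?thesis by (simp add: eq_divide_eq mult.commute)
qed

lemma second_moment: "4^n * (\<Sum>C\<in>clifford_mod_phase n. (conj_diag x (class_rep C) \<rho>)^2)
   = of_nat (card (clifford_mod_phase n)) * (pauli_coord n \<rho> (replicate n pauliI))^2
     + of_nat (card (clifford_mod_phase n)) / (2^n + 1)
       * ((\<Sum>P\<in>pauli_words n. (pauli_coord n \<rho> P)^2) - (pauli_coord n \<rho> (replicate n pauliI))^2)"
proof -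
  let ?m = "of_nat (card (clifford_mod_phase n)) :: complex"
  let ?I = "replicate n pauliI" and ?R = "pauli_words n - {replicate n pauliI}"
  have split: "(\<Sum>P\<in>pauli_words n. f P) = f ?I + (\<Sum>P\<in>?R. f P)" for f :: "complex mat list \<Rightarrow> complex"
    using sum.remove[OF finite_pauli_words identity_pauli_word] by simp
  have "4^n * (\<Sum>C\<in>clifford_mod_phase n. (conj_diag x (class_rep C) \<rho>)^2)
      = (pauli_coord n \<rho> ?I)^2 * pauli_weight ?I + (\<Sum>P\<in>?R. (pauli_coord n \<rho> P)^2 * pauli_weight P)"
    using second_moment_expand split by simp
  also have "(\<Sum>P\<in>?R. (pauli_coord n \<rho> P)^2 * pauli_weight P) = ?m / (2^n + 1) * (\<Sum>P\<in>?R. (pauli_coord n \<rho> P)^2)"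
    by (simp add: pauli_weight_non_identity sum_distrib_left ac_simps)
  finally show ?thesis
    using split[of "\<lambda>P. (pauli_coord n \<rho> P)^2"] pauli_weight_identity by (simp add: ac_simps)
qed

end

section \<open>Density matrices\<close>

lemma quadratic_nonneg_imp_le:
  fixes A B s :: real
  assumes "0 \<le> A" "0 \<le> B" "0 \<le> s" and nonneg: "\<And>t. 0 \<le> A - 2 * t * s + t^2 * B * s"
  shows "s \<le> A * B"
proof (cases "s = 0")
  case False
  then have s: "0 < s" using assms(3) by simp
  show ?thesis
  proof (cases "B = 0")
    case True
    have "0 \<le> A - 2 * ((A + 1) / (2 * s)) * s + ((A + 1) / (2 * s))^2 * B * s" by (rule nonneg)
    then show ?thesis using True s by (simp add: field_simps)
  next
    case False
    then have B: "0 < B" using assms(2) by simp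
    have "0 \<le> A - 2 * (1 / B) * s + (1 / B)^2 * B * s" by (rule nonneg)
    then have "0 \<le> A - s / B" using B by (simp add: field_simps power2_eq_square)
    then show ?thesis using B by (simp add: field_simps)
  qed
qed (use assms in simp)

context
  fixes N :: nat and \<rho> :: "complex mat"
  assumes D: "density_mat N \<rho>"
begin

lemma density_carrier: "\<rho> \<in> carrier_mat N N" using D by (simp add: density_mat_def)

lemma density_hermitian:
  "a < N \<Longrightarrow> b < N \<Longrightarrow> \<rho> $$ (b,a) = cnj (\<rho> $$ (a,b))"
proof -
  assume ab: "a < N" "b < N"
  have h: "dagger \<rho> = \<rho>" using D by (simp add: density_mat_def)
  have "dagger \<rho> $$ (b,a) = cnj (\<rho> $$ (a,b))" using ab density_carrier by (intro index_dagger) auto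
  then show ?thesis unfolding h .
qed

lemma density_trace: "(\<Sum>c<N. \<rho> $$ (c,c)) = 1"
  using D density_carrier by (simp add: density_mat_def mtrace_def)

lemma density_psd:
  "v \<in> carrier_vec N \<Longrightarrow> Im (\<Sum>i<N. cnj (v $ i) * (\<rho> *\<^sub>v v) $ i) = 0 \<and> Re (\<Sum>i<N. cnj (v $ i) * (\<rho> *\<^sub>v v) $ i) \<ge> 0"
  using D unfolding density_mat_def Let_def by blast

lemma density_quadratic_form_2:
  fixes \<alpha> \<beta> :: complex assumes ab: "a < N" "b < N" "a \<noteq> b"
  defines "v \<equiv> vec N (\<lambda>k. if k = a then \<alpha> else if k = b then \<beta> else 0)"
  shows "(\<Sum>i<N. cnj (v $ i) * (\<rho> *\<^sub>v v) $ i)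
       = cnj \<alpha> * (\<rho> $$ (a,a) * \<alpha> + \<rho> $$ (a,b) * \<beta>) + cnj \<beta> * (\<rho> $$ (b,a) * \<alpha> + \<rho> $$ (b,b) * \<beta>)"
proof -
  have mv: "(\<rho> *\<^sub>v v) $ i = \<rho> $$ (i,a) * \<alpha> + \<rho> $$ (i,b) * \<beta>" if i: "i < N" for i
  proof -
    have "(\<rho> *\<^sub>v v) $ i = (\<Sum>k<N. \<rho> $$ (i,k) * v $ k)"
      using i density_carrier by (simp add: scalar_prod_def v_def atLeast0LessThan)
    also have "\<dots> = (\<Sum>k<N. (if k = a then \<rho> $$ (i,k) * \<alpha> else 0) + (if k = b then \<rho> $$ (i,k) * \<beta> else 0))"
      using ab by (intro sum.cong refl) (auto simp: v_def)
    also have "\<dots> = \<rho> $$ (i,a) * \<alpha> + \<rho> $$ (i,b) * \<beta>"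
      using ab by (simp add: sum.distrib)
    finally show ?thesis .
  qed
  have "(\<Sum>i<N. cnj (v $ i) * (\<rho> *\<^sub>v v) $ i)
      = (\<Sum>i<N. (if i = a then cnj \<alpha> * (\<rho> *\<^sub>v v) $ i else 0) + (if i = b then cnj \<beta> * (\<rho> *\<^sub>v v) $ i else 0))"
    using ab by (intro sum.cong refl) (auto simp: v_def)
  also have "\<dots> = cnj \<alpha> * (\<rho> *\<^sub>v v) $ a + cnj \<beta> * (\<rho> *\<^sub>v v) $ b"
    using ab by (simp add: sum.distrib)
  finally show ?thesis using mv ab by simp
qed

lemma density_diag_real: "a < N \<Longrightarrow> \<rho> $$ (a,a) = complex_of_real (Re (\<rho> $$ (a,a)))"
proof -
  assume a: "a < N"
  have "Im (\<rho> $$ (a,a)) = Im (cnj (\<rho> $$ (a,a)))" using arg_cong[where f=Im, OF density_hermitian[OF a a]] .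
  then have "Im (\<rho> $$ (a,a)) = 0" by simp
  then show ?thesis by (simp add: complex_eq_iff)
qed

lemma density_diag_nonneg: assumes "a < N" shows "Re (\<rho> $$ (a,a)) \<ge> 0"
proof -
  let ?v = "vec N (\<lambda>k. if k = a then (1::complex) else 0)"
  have mv: "(\<rho> *\<^sub>v ?v) $ i = \<rho> $$ (i,a)" if i: "i < N" for i
  proof -
    have "(\<rho> *\<^sub>v ?v) $ i = (\<Sum>k<N. \<rho> $$ (i,k) * ?v $ k)"
      using i density_carrier by (simp add: scalar_prod_def atLeast0LessThan)
    also have "\<dots> = (\<Sum>k<N. if k = a then \<rho> $$ (i,k) else 0)"
      by (intro sum.cong refl) simp
    also have "\<dots> = \<rho> $$ (i,a)" using assms by simp
    finally show ?thesis .
  qed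
  have "(\<Sum>i<N. cnj (?v $ i) * (\<rho> *\<^sub>v ?v) $ i) = (\<Sum>i<N. if i = a then \<rho> $$ (a,a) else 0)"
    by (intro sum.cong refl) (simp add: mv)
  also have "\<dots> = \<rho> $$ (a,a)" using assms by simp
  finally show ?thesis using density_psd[OF vec_carrier, of "\<lambda>k. if k = a then (1::complex) else 0"] by simp
qed

lemma density_offdiag_bound: assumes ab: "a < N" "b < N" "a \<noteq> b"
  shows "(cmod (\<rho> $$ (a,b)))^2 \<le> Re (\<rho> $$ (a,a)) * Re (\<rho> $$ (b,b))"
proof -
  let ?A = "Re (\<rho> $$ (a,a))" and ?B = "Re (\<rho> $$ (b,b))" and ?r = "\<rho> $$ (a,b)"
  let ?s = "(cmod ?r)^2"
  have "0 \<le> ?A - 2 * t * ?s + t^2 * ?B * ?s" for t :: real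
  proof -
    let ?\<beta> = "- complex_of_real t * cnj ?r"
    let ?f = "\<lambda>k. if k = a then 1 else if k = b then ?\<beta> else 0"
    have "(\<Sum>i<N. cnj (vec N ?f $ i) * (\<rho> *\<^sub>v vec N ?f) $ i)
        = cnj 1 * (\<rho> $$ (a,a) * 1 + ?r * ?\<beta>) + cnj ?\<beta> * (\<rho> $$ (b,a) * 1 + \<rho> $$ (b,b) * ?\<beta>)"
      by (rule density_quadratic_form_2[OF ab])
    also have "\<dots> = \<rho> $$ (a,a) - 2 * complex_of_real t * (?r * cnj ?r) + (complex_of_real t)^2 * \<rho> $$ (b,b) * (?r * cnj ?r)"
      unfolding density_hermitian[OF ab(1) ab(2)] by (simp add: algebra_simps power2_eq_square)
    also have "\<dots> = complex_of_real (?A - 2 * t * ?s + t^2 * ?B * ?s)"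
      by (subst density_diag_real[OF ab(1)], subst density_diag_real[OF ab(2)])
        (simp flip: complex_norm_square)
    finally show ?thesis using density_psd[OF vec_carrier, of ?f] by simp
  qed
  then show ?thesis
    using density_diag_nonneg[OF ab(1)] density_diag_nonneg[OF ab(2)] by (intro quadratic_nonneg_imp_le) auto
qed

lemma density_entry_bound: assumes "a < N" "b < N"
  shows "(cmod (\<rho> $$ (a,b)))^2 \<le> Re (\<rho> $$ (a,a)) * Re (\<rho> $$ (b,b))"
proof (cases "a = b")
  case True
  have "cmod (\<rho> $$ (a,a)) = \<bar>Re (\<rho> $$ (a,a))\<bar>" using density_diag_real[OF assms(1)] by (metis norm_of_real)
  then show ?thesis using True by (simp add: power2_eq_square)
next
  case False then show ?thesis using density_offdiag_bound assms by blast
qed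

lemma density_purity:
  "(\<Sum>c<N. \<Sum>d<N. \<rho> $$ (d,c) * \<rho> $$ (c,d)) = complex_of_real (\<Sum>c<N. \<Sum>d<N. (cmod (\<rho> $$ (c,d)))^2)"
proof -
  have "\<rho> $$ (d,c) * \<rho> $$ (c,d) = complex_of_real ((cmod (\<rho> $$ (c,d)))^2)" if "c < N" "d < N" for c d
  proof -
    have "\<rho> $$ (d,c) * \<rho> $$ (c,d) = \<rho> $$ (c,d) * cnj (\<rho> $$ (c,d))"
      by (subst density_hermitian[OF that]) (rule mult.commute)
    then show ?thesis by (simp only: complex_norm_square)
  qed
  then show ?thesis by (simp add: of_real_sum)
qed

lemma density_purity_le_1: "(\<Sum>c<N. \<Sum>d<N. (cmod (\<rho> $$ (c,d)))^2) \<le> 1"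
proof -
  have "(\<Sum>c<N. \<Sum>d<N. (cmod (\<rho> $$ (c,d)))^2) \<le> (\<Sum>c<N. \<Sum>d<N. Re (\<rho> $$ (c,c)) * Re (\<rho> $$ (d,d)))"
    by (intro sum_mono) (simp add: density_entry_bound)
  also have "\<dots> = (\<Sum>c<N. Re (\<rho> $$ (c,c))) * (\<Sum>d<N. Re (\<rho> $$ (d,d)))"
    by (simp add: sum_product)
  also have "(\<Sum>c<N. Re (\<rho> $$ (c,c))) = 1"
    using density_trace by (metis Re_sum one_complex.simps(1))
  finally show ?thesis by simp
qed

lemma conj_diag_density_real:
  assumes "U \<in> carrier_mat N N" "x < N"
  shows "Im (conj_diag x U \<rho>) = 0"
proof -
  have "cnj (conj_diag x U \<rho>) = conj_diag x U \<rho>"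
  proof -
    have "cnj (conj_diag x U \<rho>) = (\<Sum>i<N. \<Sum>j<N. cnj (U $$ (x,i)) * cnj (\<rho> $$ (i,j)) * U $$ (x,j))"
      by (simp add: conj_diag_expand[OF assms(1) density_carrier assms(2)])
    also have "\<dots> = (\<Sum>i<N. \<Sum>j<N. cnj (U $$ (x,i)) * \<rho> $$ (j,i) * U $$ (x,j))"
    proof (intro sum.cong refl)
      fix i j assume "i \<in> {..<N}" "j \<in> {..<N}"
      then have "\<rho> $$ (j,i) = cnj (\<rho> $$ (i,j))" by (intro density_hermitian) auto
      then show "cnj (U $$ (x,i)) * cnj (\<rho> $$ (i,j)) * U $$ (x,j) = cnj (U $$ (x,i)) * \<rho> $$ (j,i) * U $$ (x,j)"
        by simp
    qed
    also have "\<dots> = (\<Sum>j<N. \<Sum>i<N. U $$ (x,j) * \<rho> $$ (j,i) * cnj (U $$ (x,i)))"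
      by (subst sum.swap) (simp add: ac_simps)
    also have "\<dots> = conj_diag x U \<rho>" by (simp add: conj_diag_expand[OF assms(1) density_carrier assms(2)])
    finally show ?thesis .
  qed
  then have "Im (cnj (conj_diag x U \<rho>)) = Im (conj_diag x U \<rho>)" by (rule arg_cong)
  then show ?thesis by simp
qed

end

section \<open>Anticoncentration\<close>

lemma mtrace_mult_basis_proj: assumes "A \<in> carrier_mat N N" "x < N"
  shows "mtrace (A * basis_proj N x) = A $$ (x,x)"
proof -
  have "mtrace (A * basis_proj N x) = (\<Sum>i<N. (A * basis_proj N x) $$ (i,i))"
    using assms by (simp add: mtrace_def basis_proj_def)
  also have "\<dots> = (\<Sum>i<N. if i = x then A $$ (x,x) else 0)"
  proof (intro sum.cong refl)
    fix i assume i: "i \<in> {..<N}"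
    have "(A * basis_proj N x) $$ (i,i) = (\<Sum>k<N. A $$ (i,k) * basis_proj N x $$ (k,i))"
      using assms i by (simp add: scalar_prod_def basis_proj_def atLeast0LessThan)
    also have "\<dots> = (\<Sum>k<N. if k = x then (if i = x then A $$ (x,x) else 0) else 0)"
      using assms i by (intro sum.cong refl) (auto simp: basis_proj_def)
    also have "\<dots> = (if i = x then A $$ (x,x) else 0)" using assms by simp
    finally show "(A * basis_proj N x) $$ (i,i) = (if i = x then A $$ (x,x) else 0)" .
  qed
  also have "\<dots> = A $$ (x,x)" using assms by simp
  finally show ?thesis .
qed

lemma outcome_prob_conj_diag:
  assumes "U \<in> carrier_mat (2^n) (2^n)" "\<rho> \<in> carrier_mat (2^n) (2^n)" "x < 2^n"
  shows "outcome_prob n U \<rho> x = Re (conj_diag x U \<rho>)"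
  unfolding outcome_prob_def conj_diag_def using assms
  by (subst mtrace_mult_basis_proj[of _ "2^n"]) (auto intro: dagger_carrier)

lemma sum_squared_le_card_mult:
  fixes f :: "'a \<Rightarrow> real"
  assumes "finite B"
  shows "(\<Sum>a\<in>B. f a)^2 \<le> real (card B) * (\<Sum>a\<in>B. (f a)^2)"
proof -
  let ?k = "real (card B)" and ?S = "\<Sum>a\<in>B. f a"
  have "0 \<le> (\<Sum>a\<in>B. (f a * ?k - ?S)^2)" by (intro sum_nonneg) auto
  also have "\<dots> = (\<Sum>a\<in>B. (f a)^2 * ?k^2 - 2 * ?k * ?S * f a + ?S^2)"
    by (intro sum.cong refl) (simp add: power2_eq_square algebra_simps)
  also have "\<dots> = ?k * (?k * (\<Sum>a\<in>B. (f a)^2) - ?S^2)"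
    by (simp add: sum.distrib sum_subtractf sum_distrib_left sum_distrib_right power2_eq_square
        algebra_simps)
  finally have h: "0 \<le> ?k * (?k * (\<Sum>a\<in>B. (f a)^2) - ?S^2)" .
  show ?thesis
  proof (cases "B = {}")
    case False
    then have "?k > 0" using assms by (simp add: card_gt_0_iff)
    then show ?thesis using h by (simp add: zero_le_mult_iff)
  qed simp
qed

lemma paley_zygmund_count:
  fixes f :: "'a \<Rightarrow> real"
  assumes fin: "finite A" and mean: "(\<Sum>a\<in>A. f a) = real (card A) * \<mu>"
    and "0 \<le> \<mu>" and "0 \<le> \<alpha>" "\<alpha> \<le> 1"
  shows "(real (card A) * \<mu> * (1 - \<alpha>))^2 \<le> real (card {a\<in>A. \<alpha> * \<mu> \<le> f a}) * (\<Sum>a\<in>A. (f a)^2)"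
proof -
  let ?B = "{a\<in>A. \<alpha> * \<mu> \<le> f a}"
  have "(\<Sum>a\<in>A - ?B. f a) \<le> (\<Sum>a\<in>A - ?B. \<alpha> * \<mu>)" by (intro sum_mono) auto
  also have "\<dots> \<le> real (card A) * (\<alpha> * \<mu>)"
    using fin assms(3-4) by (simp add: card_mono mult_right_mono)
  finally have small: "(\<Sum>a\<in>A - ?B. f a) \<le> real (card A) * (\<alpha> * \<mu>)" .
  have "(\<Sum>a\<in>A. f a) = (\<Sum>a\<in>?B. f a) + (\<Sum>a\<in>A - ?B. f a)"
    using fin by (metis (no_types, lifting) add.commute mem_Collect_eq subsetI sum.subset_diff)
  then have large: "real (card A) * \<mu> * (1 - \<alpha>) \<le> (\<Sum>a\<in>?B. f a)"
    using mean small by (simp add: algebra_simps)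
  have "0 \<le> real (card A) * \<mu> * (1 - \<alpha>)" using assms(3,5) by simp
  then have "(real (card A) * \<mu> * (1 - \<alpha>))^2 \<le> (\<Sum>a\<in>?B. f a)^2"
    using large by (simp add: power_mono)
  also have "\<dots> \<le> real (card ?B) * (\<Sum>a\<in>?B. (f a)^2)"
    using fin by (simp add: sum_squared_le_card_mult)
  also have "\<dots> \<le> real (card ?B) * (\<Sum>a\<in>A. (f a)^2)"
    using fin by (intro mult_left_mono sum_mono2) auto
  finally show ?thesis .
qed

definition class_outcome_prob :: "nat \<Rightarrow> complex mat \<Rightarrow> nat \<Rightarrow> complex mat set \<Rightarrow> real" where
  "class_outcome_prob n \<rho> x C = Re (conj_diag x (class_rep C) \<rho>)"

lemma outcome_prob_class:
  assumes C: "C \<in> clifford_mod_phase n" and U: "U \<in> C"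
    and R: "\<rho> \<in> carrier_mat (2^n) (2^n)" and x: "x < 2^n"
  shows "outcome_prob n U \<rho> x = class_outcome_prob n \<rho> x C"
proof -
  have rep: "class_rep C \<in> carrier_mat (2^n) (2^n)"
    using cliffordD(1)[OF class_rep_props(2)[OF C]] .
  obtain c where c: "cmod c = 1" "U = c \<cdot>\<^sub>m class_rep C" using mem_phase_class[OF C U] by blast
  have "outcome_prob n U \<rho> x = Re (conj_diag x U \<rho>)"
    using outcome_prob_conj_diag[OF _ R x] c rep by simp
  also have "\<dots> = class_outcome_prob n \<rho> x C"
    unfolding class_outcome_prob_def c(2) using conj_diag_phase[OF rep R c(1) x] by simp
  finally show ?thesis .
qed

lemma clifford_prob_outcome_ge:
  assumes R: "\<rho> \<in> carrier_mat (2^n) (2^n)" and x: "x < 2^n"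
  shows "clifford_prob n (\<lambda>U. t \<le> outcome_prob n U \<rho> x)
    = real (card {C \<in> clifford_mod_phase n. t \<le> class_outcome_prob n \<rho> x C}) / real (card (clifford_mod_phase n))"
proof -
  have "(\<forall>U\<in>C. t \<le> outcome_prob n U \<rho> x) \<longleftrightarrow> t \<le> class_outcome_prob n \<rho> x C"
    if C: "C \<in> clifford_mod_phase n" for C
    using outcome_prob_class[OF C _ R x] class_rep_props(1)[OF C] by auto
  then show ?thesis unfolding clifford_prob_def by (metis (no_types, lifting) Collect_cong)
qed

context
  fixes n x :: nat and \<rho> :: "complex mat"
  assumes D: "density_mat (2^n) \<rho>" and x: "x < 2^n"
begin

private lemma class_outcome_prob_of_real:
  "C \<in> clifford_mod_phase n \<Longrightarrow> conj_diag x (class_rep C) \<rho> = complex_of_real (class_outcome_prob n \<rho> x C)"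
  using conj_diag_density_real[OF D cliffordD(1)[OF class_rep_props(2)] x]
  by (simp add: class_outcome_prob_def complex_eq_iff)

lemma sum_class_outcome_prob:
  "(\<Sum>C\<in>clifford_mod_phase n. class_outcome_prob n \<rho> x C) = real (card (clifford_mod_phase n)) * (1 / 2^n)"
proof -
  have "complex_of_real (\<Sum>C\<in>clifford_mod_phase n. class_outcome_prob n \<rho> x C)
      = (\<Sum>C\<in>clifford_mod_phase n. conj_diag x (class_rep C) \<rho>)"
    by (simp add: of_real_sum class_outcome_prob_of_real)
  also have "\<dots> = of_nat (card (clifford_mod_phase n)) / 2^n"
    using first_moment[OF x density_carrier[OF D]] pauli_coord_identity density_trace[OF D] by simp
  also have "\<dots> = complex_of_real (real (card (clifford_mod_phase n)) * (1 / 2^n))" by simp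
  finally show ?thesis by (simp only: of_real_eq_iff)
qed

lemma sum_class_outcome_prob_squares:
  "(\<Sum>C\<in>clifford_mod_phase n. (class_outcome_prob n \<rho> x C)^2)
     \<le> 2 * real (card (clifford_mod_phase n)) / (2^n * (2^n + 1))"
proof -
  let ?m = "real (card (clifford_mod_phase n))" and ?Q = "(2::real)^n"
  define T where "T = (\<Sum>c<2^n. \<Sum>d<2^n. (cmod (\<rho> $$ (c,d)))^2)"
  have T: "(\<Sum>c<2^n. \<Sum>d<2^n. \<rho> $$ (d,c) * \<rho> $$ (c,d)) = complex_of_real T" "T \<le> 1"
    unfolding T_def by (rule density_purity[OF D], rule density_purity_le_1[OF D])
  have "complex_of_real (4^n * (\<Sum>C\<in>clifford_mod_phase n. (class_outcome_prob n \<rho> x C)^2))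
      = 4^n * (\<Sum>C\<in>clifford_mod_phase n. (conj_diag x (class_rep C) \<rho>)^2)"
    by (simp add: of_real_sum class_outcome_prob_of_real)
  also have "\<dots> = complex_of_real (?m + ?m / (?Q + 1) * (?Q * T - 1))"
    using second_moment[OF x density_carrier[OF D]] pauli_coord_identity density_trace[OF D]
      sum_pauli_coord_squares[of n \<rho>] T(1) by simp
  finally have eq: "4^n * (\<Sum>C\<in>clifford_mod_phase n. (class_outcome_prob n \<rho> x C)^2)
      = ?m + ?m / (?Q + 1) * (?Q * T - 1)"
    by (simp only: of_real_eq_iff)
  have "?m + ?m / (?Q + 1) * (?Q * T - 1) \<le> ?m + ?m / (?Q + 1) * (?Q - 1)"
    using T(2) by (intro add_left_mono mult_left_mono) auto
  also have "\<dots> = 4^n * (2 * ?m / (?Q * (?Q + 1)))"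
  proof -
    have Q: "0 < ?Q" by simp
    then have Q1: "0 < ?Q + 1" by linarith
    have "?Q + 1 \<noteq> 0" "?Q \<noteq> 0" "?Q * (?Q + 1) \<noteq> 0" using Q Q1 by simp_all
    moreover have "(4::real)^n = ?Q * ?Q" by (simp flip: power_mult_distrib)
    ultimately show ?thesis by (simp add: divide_simps) (simp add: algebra_simps)
  qed
  finally have "4^n * (\<Sum>C\<in>clifford_mod_phase n. (class_outcome_prob n \<rho> x C)^2)
      \<le> 4^n * (2 * ?m / (?Q * (?Q + 1)))"
    unfolding eq .
  then show ?thesis by (simp only: mult_le_cancel_left_pos zero_less_power zero_less_numeral)
qed

end

lemma ratio_gt_half_sq:
  fixes Q m k c :: real
  assumes Q: "0 < Q" and m: "0 < m" and c: "c \<noteq> 0"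
    and h: "(m * (1 / Q) * c)^2 \<le> k * (2 * m / (Q * (Q + 1)))"
  shows "c^2 / 2 < k / m"
proof -
  have pos: "0 < Q^2" "0 < Q * (Q + 1)" using Q by auto
  have "(m * c)^2 / Q^2 \<le> 2 * k * m / (Q * (Q + 1))"
    using h by (simp add: power_mult_distrib power_divide mult.commute mult.left_commute)
  then have "(m * c)^2 * (Q * (Q + 1)) \<le> 2 * k * m * Q^2"
    using pos by (simp add: divide_le_eq le_divide_eq mult.commute)
  then have "(Q * m) * (m * c^2 * (Q + 1)) \<le> (Q * m) * (2 * k * Q)"
    by (simp add: power2_eq_square algebra_simps)
  then have "m * c^2 * (Q + 1) \<le> 2 * k * Q"
    using m Q by (simp add: mult_le_cancel_left_pos)
  moreover have "m * c^2 * Q < m * c^2 * (Q + 1)" using m c by simp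
  ultimately have "m * c^2 * Q < 2 * k * Q" by linarith
  then have "m * c^2 < 2 * k" using Q by (simp add: mult.commute)
  then show ?thesis using m by (simp add: field_simps)
qed

theorem lemma4:
  fixes n :: nat and \<rho> :: "complex mat" and \<alpha> :: real and x :: nat
  assumes "density_mat (2 ^ n) \<rho>"
    and "0 < \<alpha>" and "\<alpha> < 1"
    and "x < 2 ^ n"
  shows "clifford_prob n (\<lambda>U. outcome_prob n U \<rho> x \<ge> \<alpha> / 2 ^ n) > (1 - \<alpha>)\<^sup>2 / 2"
proof -
  let ?Cl = "clifford_mod_phase n" and ?f = "class_outcome_prob n \<rho> x"
  let ?m = "real (card ?Cl)" and ?k = "real (card {C \<in> ?Cl. \<alpha> * (1 / 2^n) \<le> ?f C})"
  have m: "0 < ?m"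
    using finite_clifford_mod_phase clifford_mod_phase_nonempty by (simp add: card_gt_0_iff)
  have "(?m * (1 / 2^n) * (1 - \<alpha>))^2 \<le> ?k * (\<Sum>C\<in>?Cl. (?f C)^2)"
    using assms(2,3) by (intro paley_zygmund_count finite_clifford_mod_phase
        sum_class_outcome_prob[OF assms(1,4)]) auto
  also have "\<dots> \<le> ?k * (2 * ?m / (2^n * (2^n + 1)))"
    by (intro mult_left_mono sum_class_outcome_prob_squares[OF assms(1,4)]) simp
  finally have "(1 - \<alpha>)^2 / 2 < ?k / ?m"
    using m assms(3) by (intro ratio_gt_half_sq) simp_all
  moreover have "clifford_prob n (\<lambda>U. outcome_prob n U \<rho> x \<ge> \<alpha> / 2 ^ n) = ?k / ?m"
    using clifford_prob_outcome_ge[OF density_carrier[OF assms(1)] assms(4)] by simp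
  ultimately show ?thesis by simp
qed

end
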